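(* Let $M$ be a Poisson manifold with a local star product $*$, let $\omega:C^\infty_0(M)[[\lambda]]\to\mathbb C[[\lambda]]$ be a positive $\mathbb C[[\lambda]]$-linear functional, and let $O,O'\subseteq M$ be open. Then: (i) $\mathfrak H_\omega(O)$ is canonically isometric to $\mathcal A_0(O)/\mathcal J_\omega(O)$, where $\mathcal J_\omega(O)=\mathcal A_0(O)\cap\mathcal J_\omega$ and the quotient carries the Hermitian product $\langle[f],[g]\rangle=\omega(\bar f*g)$; the isometry is $[f]\mapsto\psi_f$. (ii) If $O\cap O'=\emptyset$, then $\mathfrak H_\omega(O)$ and $\mathfrak H_\omega(O')$ are orthogonal. (iii) If $O\cap\operatorname{supp}\omega=\emptyset$, then $\mathfrak H_\omega(O)=\{0\}$.
   Context: $C^\infty(M)$ denotes complex-valued smooth functions and $\lambda$ is a formal parameter. A (local) star product $*$ on $M$ is an associative $\mathbb C[[\lambda]]$-bilinear product on $C^\infty(M)[[\lambda]]$ with $f*g=\sum_{r\ge0}\lambda^rM_r(f,g)$ for $f,g\in C^\infty(M)$, where the $M_r$ are local operators, $M_0(f,g)=fg$, $M_1(f,g)-M_1(g,f)=\mathrm i\{f,g\}$, $M_r$ vanishes on constants for $r\ge1$, and $\overline{f*g}=\bar g*\bar f$ ($\bar\lambda=\lambda$). For $f=\sum_r\lambda^rf_r$, $\operatorname{supp}f$ is the closure of $\bigcup_r\operatorname{supp}f_r$; $C^\infty_0(O)[[\lambda]]$ is the set of series all of whose coefficients have compact support in $O$, and $\mathcal A_0(O)=\{f\in C^\infty_0(O)[[\lambda]]:\operatorname{supp}f\subseteq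 O\}$. $\mathbb R[[\lambda]]$ is ordered by: $a>0$ iff its lowest-order nonzero coefficient is positive. $\omega$ is positive if $\omega(\bar f*f)\ge0$ for all $f$. The support of a $\mathbb C[[\lambda]]$-linear functional $\sigma$ on $C^\infty_0(M)[[\lambda]]$ is the complement of the union of all open $U$ with $\sigma|_{C^\infty_0(U)[[\lambda]]}=0$. Gel'fand ideal $\mathcal J_\omega=\{f:\omega(\bar f*f)=0\}$, GNS space $\mathfrak H_\omega=C^\infty_0(M)[[\lambda]]/\mathcal J_\omega$ with classes $\psi_f$ and $\langle\psi_f,\psi_g\rangle=\omega(\bar f*g)$; $\operatorname{supp}\psi_f:=\operatorname{supp}\omega_f$ with $\omega_f(g)=\omega(\bar f*g*f)$; and $\mathfrak H_\omega(O)=\{\psi\in\mathfrak H_\omega:\operatorname{supp}\psi\subseteq O\}$. *)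

theory Defs
  imports "HOL-Analysis.Analysis" "HOL-Computational_Algebra.Formal_Power_Series"
begin

(* Functions on M are 'm => complex; formal series in lambda with function
   coefficients are nat => 'm => complex (n-th coefficient = f n);
   scalars C[[lambda]] are complex fps. *)

definition fsupp :: "('m::topological_space \<Rightarrow> complex) \<Rightarrow> 'm set" where
  "fsupp f = closure {x. f x \<noteq> 0}"

text \<open>Abstract smooth structure: the algebra C of smooth complex functions on a
locally compact Hausdorff space, with smooth Urysohn (bump) functions.\<close>
definition smooth_structure :: "('m::t2_space \<Rightarrow> complex) set \<Rightarrow> bool" where
  "smooth_structure C \<longleftrightarrow>
     (\<forall>x::'m. \<exists>U K. open U \<and> compact K \<and> x \<in> U \<and> U \<subseteq> K) \<and>
     (\<forall>f\<in>C. continuous_on UNIV f) \<and>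
     (\<forall>c. (\<lambda>_. c) \<in> C) \<and>
     (\<forall>f\<in>C. \<forall>g\<in>C. (\<lambda>x. f x + g x) \<in> C \<and> (\<lambda>x. f x * g x) \<in> C) \<and>
     (\<forall>f\<in>C. (\<lambda>x. cnj (f x)) \<in> C) \<and>
     (\<forall>A U. closed A \<and> open U \<and> A \<subseteq> U \<longrightarrow>
        (\<exists>\<phi>\<in>C. (\<forall>x. \<phi> x \<in> \<real> \<and> 0 \<le> Re (\<phi> x) \<and> Re (\<phi> x) \<le> 1) \<and>
               (\<exists>V. open V \<and> A \<subseteq> V \<and> (\<forall>x\<in>V. \<phi> x = 1)) \<and> fsupp \<phi> \<subseteq> U))"

text \<open>Poisson bracket on C (complex-bilinear extension of a real Poisson bracket).\<close>
definition poisson_bracket ::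
  "('m \<Rightarrow> complex) set \<Rightarrow> (('m \<Rightarrow> complex) \<Rightarrow> ('m \<Rightarrow> complex) \<Rightarrow> ('m \<Rightarrow> complex)) \<Rightarrow> bool" where
  "poisson_bracket C pb \<longleftrightarrow>
     (\<forall>f\<in>C. \<forall>g\<in>C. pb f g \<in> C) \<and>
     (\<forall>a b. \<forall>f\<in>C. \<forall>g\<in>C. \<forall>h\<in>C.
        pb (\<lambda>x. a * f x + b * g x) h = (\<lambda>x. a * pb f h x + b * pb g h x)) \<and>
     (\<forall>f\<in>C. \<forall>g\<in>C. pb g f = (\<lambda>x. - pb f g x)) \<and>
     (\<forall>f\<in>C. \<forall>g\<in>C. \<forall>h\<in>C. pb f (\<lambda>x. g x * h x) = (\<lambda>x. pb f g x * h x + g x * pb f h x)) \<and>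
     (\<forall>f\<in>C. \<forall>g\<in>C. \<forall>h\<in>C.
        (\<lambda>x. pb f (pb g h) x + pb g (pb h f) x + pb h (pb f g) x) = (\<lambda>_. 0)) \<and>
     (\<forall>f\<in>C. \<forall>g\<in>C. pb (\<lambda>x. cnj (f x)) (\<lambda>x. cnj (g x)) = (\<lambda>x. cnj (pb f g x)))"

definition ser_in :: "('m \<Rightarrow> complex) set \<Rightarrow> (nat \<Rightarrow> 'm \<Rightarrow> complex) set" where
  "ser_in C = {f. \<forall>n. f n \<in> C}"

definition star ::
  "(nat \<Rightarrow> ('m \<Rightarrow> complex) \<Rightarrow> ('m \<Rightarrow> complex) \<Rightarrow> ('m \<Rightarrow> complex))
   \<Rightarrow> (nat \<Rightarrow> 'm \<Rightarrow> complex) \<Rightarrow> (nat \<Rightarrow> 'm \<Rightarrow> complex) \<Rightarrow> (nat \<Rightarrow> 'm \<Rightarrow> complex)" where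
  "star Mr f g = (\<lambda>n x. \<Sum>r\<le>n. \<Sum>s\<le>n - r. Mr r (f s) (g (n - r - s)) x)"

definition ser_conj :: "(nat \<Rightarrow> 'm \<Rightarrow> complex) \<Rightarrow> (nat \<Rightarrow> 'm \<Rightarrow> complex)" where
  "ser_conj f = (\<lambda>n x. cnj (f n x))"

definition ser_add :: "(nat \<Rightarrow> 'm \<Rightarrow> complex) \<Rightarrow> (nat \<Rightarrow> 'm \<Rightarrow> complex) \<Rightarrow> (nat \<Rightarrow> 'm \<Rightarrow> complex)" where
  "ser_add f g = (\<lambda>n x. f n x + g n x)"

definition ser_diff :: "(nat \<Rightarrow> 'm \<Rightarrow> complex) \<Rightarrow> (nat \<Rightarrow> 'm \<Rightarrow> complex) \<Rightarrow> (nat \<Rightarrow> 'm \<Rightarrow> complex)" where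
  "ser_diff f g = (\<lambda>n x. f n x - g n x)"

definition ser_smul :: "complex fps \<Rightarrow> (nat \<Rightarrow> 'm \<Rightarrow> complex) \<Rightarrow> (nat \<Rightarrow> 'm \<Rightarrow> complex)" where
  "ser_smul a f = (\<lambda>n x. \<Sum>k\<le>n. fps_nth a k * f (n - k) x)"

definition ser_zero :: "nat \<Rightarrow> 'm \<Rightarrow> complex" where
  "ser_zero = (\<lambda>n x. 0)"

definition star_product ::
  "('m::topological_space \<Rightarrow> complex) set \<Rightarrow> (('m \<Rightarrow> complex) \<Rightarrow> ('m \<Rightarrow> complex) \<Rightarrow> ('m \<Rightarrow> complex))
   \<Rightarrow> (nat \<Rightarrow> ('m \<Rightarrow> complex) \<Rightarrow> ('m \<Rightarrow> complex) \<Rightarrow> ('m \<Rightarrow> complex)) \<Rightarrow> bool" where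
  "star_product C pb Mr \<longleftrightarrow>
     (\<forall>r. \<forall>f\<in>C. \<forall>g\<in>C. Mr r f g \<in> C) \<and>
     (\<forall>r a b. \<forall>f\<in>C. \<forall>g\<in>C. \<forall>h\<in>C.
        Mr r (\<lambda>x. a * f x + b * g x) h = (\<lambda>x. a * Mr r f h x + b * Mr r g h x) \<and>
        Mr r h (\<lambda>x. a * f x + b * g x) = (\<lambda>x. a * Mr r h f x + b * Mr r h g x)) \<and>
     (\<forall>r. \<forall>f\<in>C. \<forall>g\<in>C. fsupp (Mr r f g) \<subseteq> fsupp f \<inter> fsupp g) \<and>
     (\<forall>f\<in>C. \<forall>g\<in>C. Mr 0 f g = (\<lambda>x. f x * g x)) \<and>
     (\<forall>f\<in>C. \<forall>g\<in>C. (\<lambda>x. Mr 1 f g x - Mr 1 g f x) = (\<lambda>x. \<i> * pb f g x)) \<and>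
     (\<forall>r\<ge>1. \<forall>f\<in>C. Mr r (\<lambda>_. 1) f = (\<lambda>_. 0) \<and> Mr r f (\<lambda>_. 1) = (\<lambda>_. 0)) \<and>
     (\<forall>r. \<forall>f\<in>C. \<forall>g\<in>C.
        (\<lambda>x. cnj (Mr r f g x)) = Mr r (\<lambda>x. cnj (g x)) (\<lambda>x. cnj (f x))) \<and>
     (\<forall>f\<in>ser_in C. \<forall>g\<in>ser_in C. \<forall>h\<in>ser_in C.
        star Mr (star Mr f g) h = star Mr f (star Mr g h))"

definition ser_supp :: "(nat \<Rightarrow> 'm::topological_space \<Rightarrow> complex) \<Rightarrow> 'm set" where
  "ser_supp f = closure (\<Union>n. fsupp (f n))"

definition C0 :: "('m::topological_space \<Rightarrow> complex) set \<Rightarrow> 'm set \<Rightarrow> (nat \<Rightarrow> 'm \<Rightarrow> complex) set" where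
  "C0 C U = {f \<in> ser_in C. \<forall>n. compact (fsupp (f n)) \<and> fsupp (f n) \<subseteq> U}"

definition A0 :: "('m::topological_space \<Rightarrow> complex) set \<Rightarrow> 'm set \<Rightarrow> (nat \<Rightarrow> 'm \<Rightarrow> complex) set" where
  "A0 C W = {f \<in> C0 C W. ser_supp f \<subseteq> W}"

definition lambda_linear ::
  "('m::topological_space \<Rightarrow> complex) set \<Rightarrow> ((nat \<Rightarrow> 'm \<Rightarrow> complex) \<Rightarrow> complex fps) \<Rightarrow> bool" where
  "lambda_linear C \<sigma> \<longleftrightarrow>
     (\<forall>f\<in>C0 C UNIV. \<forall>g\<in>C0 C UNIV. \<sigma> (ser_add f g) = \<sigma> f + \<sigma> g) \<and>
     (\<forall>a. \<forall>f\<in>C0 C UNIV. \<sigma> (ser_smul a f) = a * \<sigma> f)"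

text \<open>a \<ge> 0 in R[[lambda]] (viewed inside C[[lambda]]).\<close>
definition fps_nonneg :: "complex fps \<Rightarrow> bool" where
  "fps_nonneg a \<longleftrightarrow> (\<forall>n. fps_nth a n \<in> \<real>) \<and> (a \<noteq> 0 \<longrightarrow> 0 < Re (fps_nth a (subdegree a)))"

definition positive_functional ::
  "('m::topological_space \<Rightarrow> complex) set \<Rightarrow> (nat \<Rightarrow> ('m \<Rightarrow> complex) \<Rightarrow> ('m \<Rightarrow> complex) \<Rightarrow> ('m \<Rightarrow> complex))
   \<Rightarrow> ((nat \<Rightarrow> 'm \<Rightarrow> complex) \<Rightarrow> complex fps) \<Rightarrow> bool" where
  "positive_functional C Mr \<omega> \<longleftrightarrow> (\<forall>f\<in>C0 C UNIV. fps_nonneg (\<omega> (star Mr (ser_conj f) f)))"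

definition func_supp ::
  "('m::topological_space \<Rightarrow> complex) set \<Rightarrow> ((nat \<Rightarrow> 'm \<Rightarrow> complex) \<Rightarrow> complex fps) \<Rightarrow> 'm set" where
  "func_supp C \<sigma> = - \<Union>{U. open U \<and> (\<forall>f\<in>C0 C U. \<sigma> f = 0)}"

definition gelfand_ideal where
  "gelfand_ideal C Mr \<omega> = {f \<in> C0 C UNIV. \<omega> (star Mr (ser_conj f) f) = 0}"

definition gns_rel where
  "gns_rel C Mr \<omega> = {(f, g). f \<in> C0 C UNIV \<and> g \<in> C0 C UNIV \<and> ser_diff f g \<in> gelfand_ideal C Mr \<omega>}"

definition gns_space where
  "gns_space C Mr \<omega> = C0 C UNIV // gns_rel C Mr \<omega>"

definition psi where
  "psi C Mr \<omega> f = gns_rel C Mr \<omega> `` {f}"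

definition rep :: "'a set \<Rightarrow> 'a" where
  "rep X = (SOME f. f \<in> X)"

definition gns_inner where
  "gns_inner Mr \<omega> \<Psi> \<Phi> = \<omega> (star Mr (ser_conj (rep \<Psi>)) (rep \<Phi>))"

definition omega_vec where
  "omega_vec Mr \<omega> f = (\<lambda>g. \<omega> (star Mr (star Mr (ser_conj f) g) f))"

definition vec_supp where
  "vec_supp C Mr \<omega> \<Psi> = func_supp C (omega_vec Mr \<omega> (rep \<Psi>))"

definition gns_local where
  "gns_local C Mr \<omega> W = {\<Psi> \<in> gns_space C Mr \<omega>. vec_supp C Mr \<omega> \<Psi> \<subseteq> W}"

definition loc_rel where
  "loc_rel C Mr \<omega> W = {(f, g). f \<in> A0 C W \<and> g \<in> A0 C W \<and>
       ser_diff f g \<in> A0 C W \<inter> gelfand_ideal C Mr \<omega>}"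

definition loc_quot where
  "loc_quot C Mr \<omega> W = A0 C W // loc_rel C Mr \<omega> W"

definition loc_inner where
  "loc_inner Mr \<omega> X Y = \<omega> (star Mr (ser_conj (rep X)) (rep Y))"

end

theory Submission
  imports Defs
begin

(*
  For j in the Gel'fand ideal, positivity of omega in the lowest degree where omega(conj j * g)
  or omega(conj g * j) is nonzero forces both to vanish, so the inner product and the functionals
  omega_f(g) = omega(conj f * g * f) depend only on the class psi_f.

  An additive functional whose n-th coefficient depends only on the first n coefficients of its
  argument vanishes on series supported off its support: after truncation the support is
  compact, hence covered by finitely many open sets on which the functional vanishes, and smooth
  Urysohn functions split the series along the cover.

  Locality of the star product gives supp omega_f <= supp f, so psi_f lies in H(O) for f in
  A_0(O).  Conversely, if supp psi_f <= O, a cut-off phi = 1 near supp omega_f with supp phi <= O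
  replaces f by phi * f in A_0(O) without changing psi_f.  This gives the isometry; orthogonality
  and the triviality of H(O) off supp omega follow from locality of the star product and of omega.
*)

section \<open>Supports\<close>

lemma closed_fsupp [simp]: "closed (fsupp f)"
  by (simp add: fsupp_def)

lemma not_in_fsupp: "x \<notin> fsupp f \<Longrightarrow> f x = 0"
  using closure_subset[of "{x. f x \<noteq> 0}"] unfolding fsupp_def by blast

lemma fsupp_eq_empty_iff: "fsupp f = {} \<longleftrightarrow> f = (\<lambda>_. 0)"
  unfolding fsupp_def by (auto simp: fun_eq_iff)

lemma fsupp_zero [simp]: "fsupp (\<lambda>_. 0) = {}"
  by (simp add: fsupp_eq_empty_iff)

lemma fsupp_subset_closedI: "closed F \<Longrightarrow> (\<And>x. f x \<noteq> 0 \<Longrightarrow> x \<in> F) \<Longrightarrow> fsupp f \<subseteq> F"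
  unfolding fsupp_def by (rule closure_minimal) auto

lemma fsupp_mono: "(\<And>x. f x \<noteq> 0 \<Longrightarrow> g x \<noteq> 0) \<Longrightarrow> fsupp f \<subseteq> fsupp g"
  unfolding fsupp_def by (rule closure_mono) auto

lemma fsupp_add: "fsupp (\<lambda>x. f x + g x) \<subseteq> fsupp f \<union> fsupp g"
proof (rule fsupp_subset_closedI)
  show "closed (fsupp f \<union> fsupp g)" by (simp add: closed_Un)
  fix x assume "f x + g x \<noteq> 0"
  then show "x \<in> fsupp f \<union> fsupp g" using not_in_fsupp[of x f] not_in_fsupp[of x g] by fastforce
qed

lemma fsupp_diff: "fsupp (\<lambda>x. f x - g x) \<subseteq> fsupp f \<union> fsupp g"
proof (rule fsupp_subset_closedI)
  show "closed (fsupp f \<union> fsupp g)" by (simp add: closed_Un)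
  fix x assume "f x - g x \<noteq> 0"
  then show "x \<in> fsupp f \<union> fsupp g" using not_in_fsupp[of x f] not_in_fsupp[of x g] by fastforce
qed

lemma fsupp_sum: "finite I \<Longrightarrow> fsupp (\<lambda>x. \<Sum>i\<in>I. F i x) \<subseteq> (\<Union>i\<in>I. fsupp (F i))"
proof (induction I rule: finite_induct)
  case empty
  then show ?case by (simp add: fsupp_eq_empty_iff)
next
  case (insert a I)
  then show ?case
    using fsupp_add[of "F a" "\<lambda>x. \<Sum>i\<in>I. F i x"] by auto
qed

lemma fsupp_mult: "fsupp (\<lambda>x. f x * g x) \<subseteq> fsupp f \<inter> fsupp g"
  using fsupp_mono[of "\<lambda>x. f x * g x" f] fsupp_mono[of "\<lambda>x. f x * g x" g] by auto

lemma fsupp_cnj [simp]: "fsupp (\<lambda>x. cnj (f x)) = fsupp f"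
  unfolding fsupp_def by simp

lemma fsupp_one_minus_subset:
  "open V \<Longrightarrow> (\<And>x. x \<in> V \<Longrightarrow> \<phi> x = 1) \<Longrightarrow> fsupp (\<lambda>x. 1 - \<phi> x) \<subseteq> - V"
  by (rule fsupp_subset_closedI) auto

lemma compact_fsupp_subset: "compact K \<Longrightarrow> fsupp h \<subseteq> K \<Longrightarrow> compact (fsupp h)"
  using compact_Int_closed[of K "fsupp h"] by (simp add: fsupp_def Int_absorb1)

lemma fsupp_subset_initial: "m \<le> n \<Longrightarrow> fsupp (f m) \<subseteq> (\<Union>j\<le>n. fsupp (f j))"
  by auto

lemma fsupp_subset_ser_supp: "fsupp (f n) \<subseteq> ser_supp f"
  unfolding ser_supp_def by (rule subset_trans[OF _ closure_subset]) blast

lemma ser_supp_subset_closedI: "closed F \<Longrightarrow> (\<And>n. fsupp (f n) \<subseteq> F) \<Longrightarrow> ser_supp f \<subseteq> F"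
  unfolding ser_supp_def by (rule closure_minimal) auto

lemma func_supp_subset: "open W \<Longrightarrow> (\<forall>g\<in>C0 C W. \<sigma> g = 0) \<Longrightarrow> func_supp C \<sigma> \<subseteq> - W"
  unfolding func_supp_def by blast

lemma closed_func_supp: "closed (func_supp C \<sigma>)"
  unfolding func_supp_def by (intro closed_Compl open_Union) blast

lemma func_supp_cong:
  "(\<And>g. g \<in> ser_in C \<Longrightarrow> \<sigma> g = \<tau> g) \<Longrightarrow> func_supp C \<sigma> = func_supp C \<tau>"
  unfolding func_supp_def C0_def by (intro arg_cong[where f = uminus] arg_cong[where f = Union]) auto

definition ser_monom_mult :: "complex \<Rightarrow> nat \<Rightarrow> (nat \<Rightarrow> 'm \<Rightarrow> complex) \<Rightarrow> (nat \<Rightarrow> 'm \<Rightarrow> complex)" where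
  "ser_monom_mult z k f = (\<lambda>n x. if k \<le> n then z * f (n - k) x else 0)"

lemma ser_monom_mult_nth:
  "ser_monom_mult z k f n = (if k \<le> n then (\<lambda>x. z * f (n - k) x) else (\<lambda>_. 0))"
  by (auto simp: ser_monom_mult_def)

definition ser_trunc :: "nat \<Rightarrow> (nat \<Rightarrow> 'm \<Rightarrow> complex) \<Rightarrow> (nat \<Rightarrow> 'm \<Rightarrow> complex)" where
  "ser_trunc N f = (\<lambda>n x. if n \<le> N then f n x else 0)"

lemma ser_trunc_nth: "ser_trunc N f n = (if n \<le> N then f n else (\<lambda>_. 0))"
  by (auto simp: ser_trunc_def)

definition ser_of_fun :: "('m \<Rightarrow> complex) \<Rightarrow> (nat \<Rightarrow> 'm \<Rightarrow> complex)" where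
  "ser_of_fun h = (\<lambda>n. if n = 0 then h else (\<lambda>_. 0))"

definition ser_fun_mult :: "('m \<Rightarrow> complex) \<Rightarrow> (nat \<Rightarrow> 'm \<Rightarrow> complex) \<Rightarrow> (nat \<Rightarrow> 'm \<Rightarrow> complex)" where
  "ser_fun_mult \<phi> f = (\<lambda>n x. \<phi> x * f n x)"

lemma ser_smul_monom: "ser_smul (fps_const z * fps_X ^ k) f = ser_monom_mult z k f"
proof (intro ext)
  fix n x
  have "ser_smul (fps_const z * fps_X ^ k) f n x = (\<Sum>j\<le>n. if j = k then z * f (n - j) x else 0)"
    unfolding ser_smul_def by (intro sum.cong) auto
  then show "ser_smul (fps_const z * fps_X ^ k) f n x = ser_monom_mult z k f n x"
    by (simp add: ser_monom_mult_def)
qed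

lemma ser_diff_eq_add_monom: "ser_diff f g = ser_add f (ser_monom_mult (-1) 0 g)"
  by (simp add: ser_diff_def ser_add_def ser_monom_mult_def)

lemma ser_diff_self: "ser_diff f f = ser_zero"
  by (simp add: ser_diff_def ser_zero_def)

lemma ser_diff_swap: "ser_diff g f = ser_monom_mult (-1) 0 (ser_diff f g)"
  by (simp add: ser_diff_def ser_monom_mult_def)

lemma ser_diff_trans: "ser_diff f h = ser_add (ser_diff f g) (ser_diff g h)"
  by (simp add: ser_diff_def ser_add_def)

lemma ser_add_diff: "g = ser_add f (ser_diff g f)"
  by (simp add: ser_diff_def ser_add_def)

lemma ser_add_trunc_tail:
  "f = ser_add (ser_trunc N f) (ser_monom_mult 1 (Suc N) (\<lambda>k. f (k + Suc N)))"
  by (auto simp: fun_eq_iff ser_add_def ser_trunc_def ser_monom_mult_def)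

lemma ser_add_of_fun: "ser_add (ser_of_fun a) (ser_of_fun b) = ser_of_fun (\<lambda>x. a x + b x)"
  by (auto simp: ser_of_fun_def ser_add_def fun_eq_iff)

lemma ser_add_fun_mult_one_minus: "ser_add (ser_fun_mult \<phi> f) (ser_fun_mult (\<lambda>x. 1 - \<phi> x) f) = f"
  by (simp add: ser_add_def ser_fun_mult_def fun_eq_iff algebra_simps)

lemma ser_conj_add: "ser_conj (ser_add f g) = ser_add (ser_conj f) (ser_conj g)"
  by (simp add: ser_conj_def ser_add_def)

lemma ser_conj_monom_mult: "ser_conj (ser_monom_mult z k f) = ser_monom_mult (cnj z) k (ser_conj f)"
  by (auto simp: ser_conj_def ser_monom_mult_def fun_eq_iff)

lemma ser_conj_conj [simp]: "ser_conj (ser_conj f) = f"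
  by (simp add: ser_conj_def)

lemma ser_conj_zero: "ser_conj ser_zero = ser_zero"
  by (simp add: ser_conj_def ser_zero_def)

lemma fsupp_ser_fun_mult: "fsupp (ser_fun_mult \<phi> f n) \<subseteq> fsupp \<phi> \<inter> fsupp (f n)"
  unfolding ser_fun_mult_def by (rule fsupp_mult)

lemma fsupp_ser_monom_mult: "fsupp (ser_monom_mult z k f n) \<subseteq> fsupp (f (n - k))"
  by (rule fsupp_mono) (auto simp: ser_monom_mult_def split: if_splits)

lemma fsupp_ser_trunc: "fsupp (ser_trunc N f n) \<subseteq> fsupp (f n)"
  by (rule fsupp_mono) (auto simp: ser_trunc_def split: if_splits)

lemma fsupp_ser_of_fun: "fsupp (ser_of_fun h n) \<subseteq> fsupp h"
  by (simp add: ser_of_fun_def fsupp_eq_empty_iff[THEN iffD2])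

lemma ser_eq_zero_iff: "f = ser_zero \<longleftrightarrow> (\<forall>n. fsupp (f n) = {})"
  by (auto simp: ser_zero_def fsupp_eq_empty_iff fun_eq_iff)

lemma C0_ser_in: "f \<in> C0 C U \<Longrightarrow> f \<in> ser_in C"
  by (simp add: C0_def)

lemma C0_compact: "f \<in> C0 C U \<Longrightarrow> compact (fsupp (f n))"
  by (simp add: C0_def)

lemma C0_fsupp_subset: "f \<in> C0 C U \<Longrightarrow> fsupp (f n) \<subseteq> U"
  by (simp add: C0_def)

lemma C0_mono: "U \<subseteq> U' \<Longrightarrow> f \<in> C0 C U \<Longrightarrow> f \<in> C0 C U'"
  unfolding C0_def by blast

lemma A0_subset_C0: "A0 C U \<subseteq> C0 C U"
  by (simp add: A0_def)

lemma A0_ser_supp: "f \<in> A0 C U \<Longrightarrow> ser_supp f \<subseteq> U"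
  by (simp add: A0_def)

lemma compact_C0_initial_supp: "f \<in> C0 C U \<Longrightarrow> compact (\<Union>m\<le>n. fsupp (f m))"
  by (auto intro: C0_compact)

lemma C0_dominated:
  assumes "h \<in> ser_in C" "f \<in> C0 C U" "\<And>n. fsupp (h n) \<subseteq> (\<Union>m\<le>n. fsupp (f m))"
  shows "h \<in> C0 C U"
  unfolding C0_def
proof (intro CollectI conjI allI assms(1))
  fix n
  show "compact (fsupp (h n))"
    by (rule compact_fsupp_subset[OF compact_C0_initial_supp[OF assms(2)] assms(3)])
  show "fsupp (h n) \<subseteq> U" using assms(3)[of n] C0_fsupp_subset[OF assms(2)] by blast
qed

lemma A0I:
  assumes "h \<in> ser_in C" "\<And>n. compact (fsupp (h n))" "closed F" "F \<subseteq> W" "\<And>n. fsupp (h n) \<subseteq> F"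
  shows "h \<in> A0 C W"
proof -
  have "ser_supp h \<subseteq> F" by (rule ser_supp_subset_closedI) (use assms in auto)
  then show ?thesis using assms unfolding A0_def C0_def by blast
qed

lemma ser_tail_C0: "f \<in> C0 C U \<Longrightarrow> (\<lambda>k. f (k + N)) \<in> C0 C U"
  unfolding C0_def ser_in_def by auto

section \<open>Functionals vanish off their support\<close>

locale smooth_series =
  fixes C :: "('m::t2_space \<Rightarrow> complex) set"
  assumes smooth: "smooth_structure C"
begin

abbreviation C0M :: "(nat \<Rightarrow> 'm \<Rightarrow> complex) set" where
  "C0M \<equiv> C0 C UNIV"

lemma C_const: "(\<lambda>_. c) \<in> C"
  using smooth by (simp add: smooth_structure_def)

lemma C_add: "f \<in> C \<Longrightarrow> g \<in> C \<Longrightarrow> (\<lambda>x. f x + g x) \<in> C"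
  using smooth by (simp add: smooth_structure_def)

lemma C_mult: "f \<in> C \<Longrightarrow> g \<in> C \<Longrightarrow> (\<lambda>x. f x * g x) \<in> C"
  using smooth by (simp add: smooth_structure_def)

lemma C_cnj: "f \<in> C \<Longrightarrow> (\<lambda>x. cnj (f x)) \<in> C"
  using smooth by (simp add: smooth_structure_def)

lemma C_sum: "finite I \<Longrightarrow> (\<And>i. i \<in> I \<Longrightarrow> F i \<in> C) \<Longrightarrow> (\<lambda>x. \<Sum>i\<in>I. F i x) \<in> C"
  by (induction I rule: finite_induct) (simp_all add: C_const C_add)

lemma C_one_minus: "f \<in> C \<Longrightarrow> (\<lambda>x. 1 - f x) \<in> C"
  using C_add[OF C_const C_mult[OF C_const], of f 1 "-1"] by simp

lemma smooth_urysohn: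
  assumes "closed A" "open U" "A \<subseteq> U"
  obtains \<phi> V where "\<phi> \<in> C" "open V" "A \<subseteq> V" "\<And>x. x \<in> V \<Longrightarrow> \<phi> x = 1" "fsupp \<phi> \<subseteq> U"
proof -
  have "closed A \<and> open U \<and> A \<subseteq> U \<longrightarrow>
     (\<exists>\<phi>\<in>C. (\<forall>x. \<phi> x \<in> \<real> \<and> 0 \<le> Re (\<phi> x) \<and> Re (\<phi> x) \<le> 1) \<and>
       (\<exists>V. open V \<and> A \<subseteq> V \<and> (\<forall>x\<in>V. \<phi> x = 1)) \<and> fsupp \<phi> \<subseteq> U)"
    using smooth unfolding smooth_structure_def by (elim conjE allE) assumption
  then show ?thesis using assms that by blast
qed

lemma smooth_bump_compact:
  assumes "compact K"
  obtains \<phi> V where "\<phi> \<in> C" "open V" "K \<subseteq> V" "\<And>x. x \<in> V \<Longrightarrow> \<phi> x = 1" "compact (fsupp \<phi>)"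
proof -
  define \<U> :: "'m set set" where "\<U> = {U. open U \<and> (\<exists>L. compact L \<and> U \<subseteq> L)}"
  have "K \<subseteq> \<Union>\<U>"
    using smooth[unfolded smooth_structure_def, THEN conjunct1] unfolding \<U>_def by blast
  then obtain \<F> where \<F>: "\<F> \<subseteq> \<U>" "finite \<F>" "K \<subseteq> \<Union>\<F>"
    using compactE[OF assms] unfolding \<U>_def by blast
  have "\<forall>U\<in>\<F>. \<exists>L. compact L \<and> U \<subseteq> L" using \<F>(1) by (auto simp: \<U>_def)
  then obtain L where L: "\<forall>U\<in>\<F>. compact (L U) \<and> U \<subseteq> L U" by (auto dest!: bchoice)
  have "open (\<Union>\<F>)" using \<F>(1) by (auto simp: \<U>_def)
  then obtain \<phi> V where \<phi>: "\<phi> \<in> C" "open V" "K \<subseteq> V" "\<And>x. x \<in> V \<Longrightarrow> \<phi> x = 1" "fsupp \<phi> \<subseteq> \<Union>\<F>"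
    using smooth_urysohn[OF compact_imp_closed[OF assms] _ \<F>(3)] by blast
  have "fsupp \<phi> \<subseteq> (\<Union>U\<in>\<F>. L U)" using \<phi>(5) L by blast
  then have "compact (fsupp \<phi>)"
    by (rule compact_fsupp_subset[rotated]) (use L \<F>(2) in auto)
  then show ?thesis using that \<phi> by blast
qed

lemma ser_inD: "f \<in> ser_in C \<Longrightarrow> f n \<in> C"
  by (simp add: ser_in_def)

lemma ser_inI: "(\<And>n. f n \<in> C) \<Longrightarrow> f \<in> ser_in C"
  by (simp add: ser_in_def)

lemma ser_add_in: "f \<in> ser_in C \<Longrightarrow> g \<in> ser_in C \<Longrightarrow> ser_add f g \<in> ser_in C"
  by (simp add: ser_in_def ser_add_def C_add)

lemma ser_conj_in: "f \<in> ser_in C \<Longrightarrow> ser_conj f \<in> ser_in C"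
  by (simp add: ser_in_def ser_conj_def C_cnj)

lemma ser_monom_mult_in: "f \<in> ser_in C \<Longrightarrow> ser_monom_mult z k f \<in> ser_in C"
  by (intro ser_inI) (simp add: ser_monom_mult_nth C_mult C_const ser_inD)

lemma ser_zero_in: "ser_zero \<in> ser_in C"
  by (simp add: ser_in_def ser_zero_def C_const)

lemma ser_trunc_in: "f \<in> ser_in C \<Longrightarrow> ser_trunc N f \<in> ser_in C"
  by (intro ser_inI) (simp add: ser_trunc_nth C_const ser_inD)

lemma ser_of_fun_in: "h \<in> C \<Longrightarrow> ser_of_fun h \<in> ser_in C"
  unfolding ser_of_fun_def by (intro ser_inI) (simp add: C_const)

lemma ser_fun_mult_in: "\<phi> \<in> C \<Longrightarrow> f \<in> ser_in C \<Longrightarrow> ser_fun_mult \<phi> f \<in> ser_in C"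
  by (simp add: ser_in_def ser_fun_mult_def C_mult)

lemma ser_add_C0:
  assumes "f \<in> C0 C U" "g \<in> C0 C U"
  shows "ser_add f g \<in> C0 C U"
  unfolding C0_def
proof (intro CollectI conjI allI ser_add_in C0_ser_in[OF assms(1)] C0_ser_in[OF assms(2)])
  fix n
  have fsupp_n: "fsupp (ser_add f g n) \<subseteq> fsupp (f n) \<union> fsupp (g n)"
    unfolding ser_add_def by (rule fsupp_add)
  then show "compact (fsupp (ser_add f g n))"
    by (rule compact_fsupp_subset[rotated]) (intro compact_Un C0_compact[OF assms(1)] C0_compact[OF assms(2)])
  show "fsupp (ser_add f g n) \<subseteq> U"
    using fsupp_n C0_fsupp_subset[OF assms(1)] C0_fsupp_subset[OF assms(2)] by blast
qed

lemma ser_monom_mult_C0: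
  assumes "f \<in> C0 C U"
  shows "ser_monom_mult z k f \<in> C0 C U"
proof (rule C0_dominated[OF ser_monom_mult_in[OF C0_ser_in[OF assms]] assms])
  show "fsupp (ser_monom_mult z k f n) \<subseteq> (\<Union>j\<le>n. fsupp (f j))" for n
    using fsupp_ser_monom_mult[of z k f n] fsupp_subset_initial[OF diff_le_self[of n k], of f]
    by (rule order_trans)
qed

lemma ser_diff_C0: "f \<in> C0 C U \<Longrightarrow> g \<in> C0 C U \<Longrightarrow> ser_diff f g \<in> C0 C U"
  unfolding ser_diff_eq_add_monom by (intro ser_add_C0 ser_monom_mult_C0)

lemma ser_diff_A0:
  assumes "f \<in> A0 C U" "g \<in> A0 C U"
  shows "ser_diff f g \<in> A0 C U"
proof (rule A0I[where F = "ser_supp f \<union> ser_supp g"])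
  have C0: "ser_diff f g \<in> C0 C U" using assms A0_subset_C0[of C U] by (blast intro: ser_diff_C0)
  show "ser_diff f g \<in> ser_in C" by (rule C0_ser_in[OF C0])
  show "compact (fsupp (ser_diff f g n))" for n by (rule C0_compact[OF C0])
  show "closed (ser_supp f \<union> ser_supp g)" by (simp add: ser_supp_def closed_Un)
  show "ser_supp f \<union> ser_supp g \<subseteq> U" using assms by (auto dest: A0_ser_supp)
  show "fsupp (ser_diff f g n) \<subseteq> ser_supp f \<union> ser_supp g" for n
    using fsupp_diff[of "f n" "g n"] fsupp_subset_ser_supp[of f n] fsupp_subset_ser_supp[of g n]
    unfolding ser_diff_def by blast
qed

lemma ser_conj_C0: "f \<in> C0 C U \<Longrightarrow> ser_conj f \<in> C0 C U"
  using ser_conj_in[of f] by (simp add: C0_def ser_conj_def)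

lemma ser_trunc_C0:
  assumes "f \<in> C0 C U"
  shows "ser_trunc N f \<in> C0 C U"
proof (rule C0_dominated[OF ser_trunc_in[OF C0_ser_in[OF assms]] assms])
  show "fsupp (ser_trunc N f n) \<subseteq> (\<Union>j\<le>n. fsupp (f j))" for n
    using fsupp_ser_trunc[of N f n] by auto
qed

lemma ser_zero_C0: "ser_zero \<in> C0 C U"
  using ser_zero_in unfolding C0_def ser_zero_def fsupp_def by simp

lemma A0_C0M: "f \<in> A0 C U \<Longrightarrow> f \<in> C0M"
  using A0_subset_C0[of C U] C0_mono[of U UNIV] by blast

lemma A0_Un_split:
  assumes "open W1" "open W2" "g \<in> A0 C (W1 \<union> W2)"
  obtains h1 h2 where "h1 \<in> A0 C W1" "h2 \<in> A0 C W2" "g = ser_add h1 h2"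
proof -
  have g: "g \<in> C0 C (W1 \<union> W2)" "ser_supp g \<subseteq> W1 \<union> W2"
    using assms(3) by (auto simp: A0_def)
  have closed: "closed (ser_supp g \<inter> - W2)"
    using assms(2) by (intro closed_Int closed_Compl) (simp_all add: ser_supp_def)
  have "ser_supp g \<inter> - W2 \<subseteq> W1" using g(2) by blast
  then obtain \<phi> V where \<phi>: "\<phi> \<in> C" "open V" "ser_supp g \<inter> - W2 \<subseteq> V"
    "\<And>x. x \<in> V \<Longrightarrow> \<phi> x = 1" "fsupp \<phi> \<subseteq> W1"
    using smooth_urysohn[OF closed assms(1)] by blast
  have compact: "compact (fsupp (ser_fun_mult \<psi> g n))" for \<psi> n
    by (rule compact_fsupp_subset[OF C0_compact[OF g(1)]]) (use fsupp_ser_fun_mult[of \<psi> g n] in blast)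
  have "ser_fun_mult \<phi> g \<in> A0 C W1"
  proof (rule A0I[where F = "fsupp \<phi>"])
    show "ser_fun_mult \<phi> g \<in> ser_in C" by (intro ser_fun_mult_in \<phi>(1) C0_ser_in[OF g(1)])
    show "fsupp (ser_fun_mult \<phi> g n) \<subseteq> fsupp \<phi>" for n using fsupp_ser_fun_mult by blast
  qed (rule compact, rule closed_fsupp, rule \<phi>(5))
  moreover have "ser_fun_mult (\<lambda>x. 1 - \<phi> x) g \<in> A0 C W2"
  proof (rule A0I[where F = "- V \<inter> ser_supp g"])
    show "ser_fun_mult (\<lambda>x. 1 - \<phi> x) g \<in> ser_in C"
      by (intro ser_fun_mult_in C_one_minus \<phi>(1) C0_ser_in[OF g(1)])
    show "closed (- V \<inter> ser_supp g)" using \<phi>(2) by (intro closed_Int closed_Compl) (simp_all add: ser_supp_def)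
    show "- V \<inter> ser_supp g \<subseteq> W2" using \<phi>(3) by blast
    show "fsupp (ser_fun_mult (\<lambda>x. 1 - \<phi> x) g n) \<subseteq> - V \<inter> ser_supp g" for n
      using fsupp_ser_fun_mult Int_mono[OF fsupp_one_minus_subset[OF \<phi>(2,4)] fsupp_subset_ser_supp]
      by (rule order_trans)
  qed (rule compact)
  ultimately show ?thesis using that ser_add_fun_mult_one_minus[of \<phi> g] by simp
qed

lemma additive_zero:
  fixes \<sigma> :: "(nat \<Rightarrow> 'm \<Rightarrow> complex) \<Rightarrow> 'a::ab_group_add"
  assumes "\<And>f g. f \<in> C0M \<Longrightarrow> g \<in> C0M \<Longrightarrow> \<sigma> (ser_add f g) = \<sigma> f + \<sigma> g"
  shows "\<sigma> ser_zero = 0"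
proof -
  have "ser_add ser_zero ser_zero = (ser_zero :: nat \<Rightarrow> 'm \<Rightarrow> complex)"
    by (simp add: ser_add_def ser_zero_def)
  then show ?thesis using assms[OF ser_zero_C0 ser_zero_C0] by simp
qed

lemma additive_vanishing_Union:
  fixes \<sigma> :: "(nat \<Rightarrow> 'm \<Rightarrow> complex) \<Rightarrow> 'a::ab_group_add"
  assumes add: "\<And>f g. f \<in> C0M \<Longrightarrow> g \<in> C0M \<Longrightarrow> \<sigma> (ser_add f g) = \<sigma> f + \<sigma> g"
    and "finite \<F>" "\<And>W. W \<in> \<F> \<Longrightarrow> open W" "\<And>W g. W \<in> \<F> \<Longrightarrow> g \<in> A0 C W \<Longrightarrow> \<sigma> g = 0"
    and "g \<in> A0 C (\<Union>\<F>)"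
  shows "\<sigma> g = 0"
  using assms(2-)
proof (induction \<F> arbitrary: g rule: finite_induct)
  case empty
  have "fsupp (g n) = {}" for n
    using fsupp_subset_ser_supp[of g n] A0_ser_supp[OF empty.prems(3)] by simp
  then have "g = ser_zero" by (simp add: ser_eq_zero_iff)
  then show ?case using additive_zero[of \<sigma>, OF add] by simp
next
  case (insert W \<F>)
  have "open W" "open (\<Union>\<F>)" using insert.prems(1) by auto
  moreover have "g \<in> A0 C (W \<union> \<Union>\<F>)" using insert.prems(3) by simp
  ultimately obtain h1 h2 where h: "h1 \<in> A0 C W" "h2 \<in> A0 C (\<Union>\<F>)" "g = ser_add h1 h2"
    by (rule A0_Un_split)
  have "\<sigma> h1 = 0" using insert.prems(2) h(1) by blast
  moreover have "\<sigma> h2 = 0"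
    using insert.IH[OF _ _ h(2)] insert.prems(1,2) by blast
  ultimately show ?case using add[OF A0_C0M[OF h(1)] A0_C0M[OF h(2)]] h(3) by simp
qed

lemma vanishes_off_func_supp:
  fixes \<sigma> :: "(nat \<Rightarrow> 'm \<Rightarrow> complex) \<Rightarrow> complex fps"
  assumes add: "\<And>f g. f \<in> C0M \<Longrightarrow> g \<in> C0M \<Longrightarrow> \<sigma> (ser_add f g) = \<sigma> f + \<sigma> g"
    and causal: "\<And>f g n. f \<in> C0M \<Longrightarrow> g \<in> C0M \<Longrightarrow> (\<And>k. k \<le> n \<Longrightarrow> f k = g k) \<Longrightarrow>
                   fps_nth (\<sigma> f) n = fps_nth (\<sigma> g) n"
    and g: "g \<in> C0 C (- func_supp C \<sigma>)"
  shows "\<sigma> g = 0"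
proof (rule fps_ext)
  fix n
  define T where "T = ser_trunc n g"
  define K where "K = (\<Union>k\<le>n. fsupp (g k))"
  have gM: "g \<in> C0M" using C0_mono[OF _ g] by blast
  have T: "T \<in> C0M" by (simp add: T_def ser_trunc_C0 gM)
  have "fps_nth (\<sigma> g) n = fps_nth (\<sigma> T) n"
    by (rule causal[OF gM T]) (simp add: T_def ser_trunc_nth)
  have K: "compact K" unfolding K_def by (rule compact_C0_initial_supp[OF g])
  define \<U> where "\<U> = {U. open U \<and> (\<forall>f\<in>C0 C U. \<sigma> f = 0)}"
  have "K \<subseteq> \<Union>\<U>"
    using C0_fsupp_subset[OF g] by (auto simp: K_def \<U>_def func_supp_def)
  then obtain \<F> where \<F>: "\<F> \<subseteq> \<U>" "finite \<F>" "K \<subseteq> \<Union>\<F>"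
    using compactE[OF K] unfolding \<U>_def by blast
  have fsupp_T: "fsupp (T k) \<subseteq> K" for k
    by (auto simp: T_def ser_trunc_nth K_def)
  have "T \<in> A0 C (\<Union>\<F>)"
    by (rule A0I[where F = K])
      (use T fsupp_T K \<F>(3) in \<open>auto intro: C0_ser_in C0_compact compact_imp_closed\<close>)
  then have "\<sigma> T = 0"
  proof (rule additive_vanishing_Union[of \<sigma>, OF add \<F>(2), rotated -1])
    show "open W" if "W \<in> \<F>" for W using \<F>(1) that by (auto simp: \<U>_def)
    show "\<sigma> f = 0" if "W \<in> \<F>" "f \<in> A0 C W" for W f
      using \<F>(1) that A0_subset_C0[of C W] by (auto simp: \<U>_def)
  qed
  then show "fps_nth (\<sigma> g) n = fps_nth 0 n" using \<open>fps_nth (\<sigma> g) n = fps_nth (\<sigma> T) n\<close> by simp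
qed

end

section \<open>Local star products\<close>

lemma sum_atMost_if_le_shift:
  fixes F :: "nat \<Rightarrow> 'a::comm_monoid_add"
  shows "(\<Sum>s\<le>m. if k \<le> s then F s else 0) = (if k \<le> m then \<Sum>s\<le>m - k. F (s + k) else 0)"
proof (induction m)
  case (Suc m)
  then show ?case
    by (cases "k \<le> m"; cases "k = Suc m") (simp_all add: Suc_diff_le add.commute)
qed auto

lemma sum_atMost_if_le_diff:
  fixes H :: "nat \<Rightarrow> 'a::comm_monoid_add"
  shows "(\<Sum>r\<le>n. if k \<le> n - r then H r else 0) = (if k \<le> n then \<Sum>r\<le>n - k. H r else 0)"
proof (cases "k \<le> n")
  case True
  have "(\<Sum>r\<le>n. if k \<le> n - r then H r else 0) = sum H {r \<in> {..n}. k \<le> n - r}"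
    using sum.inter_filter[of "{..n}" H "\<lambda>r. k \<le> n - r"] by simp
  also have "{r \<in> {..n}. k \<le> n - r} = {..n - k}" using True by auto
  finally show ?thesis using True by simp
qed (auto intro!: sum.neutral)

lemma sum_atMost_reflect:
  fixes F :: "nat \<Rightarrow> nat \<Rightarrow> 'a::comm_monoid_add"
  shows "(\<Sum>s\<le>m. F s (m - s)) = (\<Sum>s\<le>m. F (m - s) s)"
proof -
  have "(\<Sum>s\<in>{0..m}. F s (m - s)) = (\<Sum>s\<in>{0..m}. F (m + 0 - s) (m - (m + 0 - s)))"
    by (rule sum.atLeastAtMost_rev)
  also have "\<dots> = (\<Sum>s\<in>{0..m}. F (m - s) s)"
    by (rule sum.cong) auto
  finally show ?thesis by (simp add: atLeast0AtMost)
qed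

locale star_algebra = smooth_series C
  for C :: "('m::t2_space \<Rightarrow> complex) set" +
  fixes pb :: "('m \<Rightarrow> complex) \<Rightarrow> ('m \<Rightarrow> complex) \<Rightarrow> ('m \<Rightarrow> complex)"
    and Mr :: "nat \<Rightarrow> ('m \<Rightarrow> complex) \<Rightarrow> ('m \<Rightarrow> complex) \<Rightarrow> ('m \<Rightarrow> complex)"
  assumes star: "star_product C pb Mr"
begin

lemma Mr_in: "f \<in> C \<Longrightarrow> g \<in> C \<Longrightarrow> Mr r f g \<in> C"
  using star by (simp add: star_product_def)

lemma Mr_lin_left: "f \<in> C \<Longrightarrow> g \<in> C \<Longrightarrow> h \<in> C \<Longrightarrow>
    Mr r (\<lambda>x. a * f x + b * g x) h = (\<lambda>x. a * Mr r f h x + b * Mr r g h x)"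
  using star by (simp add: star_product_def)

lemma Mr_lin_right: "f \<in> C \<Longrightarrow> g \<in> C \<Longrightarrow> h \<in> C \<Longrightarrow>
    Mr r h (\<lambda>x. a * f x + b * g x) = (\<lambda>x. a * Mr r h f x + b * Mr r h g x)"
  using star by (simp add: star_product_def)

lemma Mr_add_left: "f \<in> C \<Longrightarrow> g \<in> C \<Longrightarrow> h \<in> C \<Longrightarrow>
    Mr r (\<lambda>x. f x + g x) h = (\<lambda>x. Mr r f h x + Mr r g h x)"
  using Mr_lin_left[of f g h r 1 1] by simp

lemma Mr_add_right: "f \<in> C \<Longrightarrow> g \<in> C \<Longrightarrow> h \<in> C \<Longrightarrow>
    Mr r h (\<lambda>x. f x + g x) = (\<lambda>x. Mr r h f x + Mr r h g x)"
  using Mr_lin_right[of f g h r 1 1] by simp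

lemma Mr_scale_left: "f \<in> C \<Longrightarrow> h \<in> C \<Longrightarrow> Mr r (\<lambda>x. c * f x) h = (\<lambda>x. c * Mr r f h x)"
  using Mr_lin_left[of f f h r c 0] by simp

lemma Mr_fsupp: "f \<in> C \<Longrightarrow> g \<in> C \<Longrightarrow> fsupp (Mr r f g) \<subseteq> fsupp f \<inter> fsupp g"
  using star by (simp add: star_product_def)

lemma Mr_0: "f \<in> C \<Longrightarrow> g \<in> C \<Longrightarrow> Mr 0 f g = (\<lambda>x. f x * g x)"
  using star by (simp add: star_product_def)

lemma Mr_one_left: "1 \<le> r \<Longrightarrow> f \<in> C \<Longrightarrow> Mr r (\<lambda>_. 1) f = (\<lambda>_. 0)"
  using star by (simp add: star_product_def)

lemma Mr_cnj: "f \<in> C \<Longrightarrow> g \<in> C \<Longrightarrow> (\<lambda>x. cnj (Mr r f g x)) = Mr r (\<lambda>x. cnj (g x)) (\<lambda>x. cnj (f x))"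
  using star by (simp add: star_product_def)

lemma star_assoc: "f \<in> ser_in C \<Longrightarrow> g \<in> ser_in C \<Longrightarrow> h \<in> ser_in C \<Longrightarrow>
    star Mr (star Mr f g) h = star Mr f (star Mr g h)"
  using star by (simp add: star_product_def)

lemma Mr_zero_left: "h \<in> C \<Longrightarrow> Mr r (\<lambda>_. 0) h = (\<lambda>_. 0)"
  using Mr_scale_left[of h h r 0] by simp

lemma Mr_eq_zero_if_disjoint:
  "f \<in> C \<Longrightarrow> g \<in> C \<Longrightarrow> fsupp f \<inter> fsupp g = {} \<Longrightarrow> Mr r f g = (\<lambda>_. 0)"
  using Mr_fsupp[of f g r] by (simp add: fsupp_eq_empty_iff[symmetric])

lemma Mr_add_right_disjoint:
  "f \<in> C \<Longrightarrow> g \<in> C \<Longrightarrow> h \<in> C \<Longrightarrow> fsupp f \<inter> fsupp h = {} \<Longrightarrow>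
    Mr r f (\<lambda>x. g x + h x) = Mr r f g"
  using Mr_add_right[of g h f r] Mr_eq_zero_if_disjoint[of f h r] by simp

lemma star_nth: "star Mr f g n = (\<lambda>x. \<Sum>r\<le>n. \<Sum>s\<le>n - r. Mr r (f s) (g (n - r - s)) x)"
  by (simp add: star_def)

lemma star_in: "f \<in> ser_in C \<Longrightarrow> g \<in> ser_in C \<Longrightarrow> star Mr f g \<in> ser_in C"
  unfolding star_nth by (intro ser_inI C_sum Mr_in) (simp_all add: ser_inD)

lemma star_add_left: "f \<in> ser_in C \<Longrightarrow> g \<in> ser_in C \<Longrightarrow> h \<in> ser_in C \<Longrightarrow>
    star Mr (ser_add f g) h = ser_add (star Mr f h) (star Mr g h)"
  unfolding star_def ser_add_def by (simp add: Mr_add_left ser_inD sum.distrib)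

lemma star_add_right: "f \<in> ser_in C \<Longrightarrow> g \<in> ser_in C \<Longrightarrow> h \<in> ser_in C \<Longrightarrow>
    star Mr h (ser_add f g) = ser_add (star Mr h f) (star Mr h g)"
  unfolding star_def ser_add_def by (simp add: Mr_add_right ser_inD sum.distrib)

lemma star_add_add:
  assumes "f1 \<in> ser_in C" "f2 \<in> ser_in C" "g1 \<in> ser_in C" "g2 \<in> ser_in C"
  shows "star Mr (ser_add f1 f2) (ser_add g1 g2) =
    ser_add (ser_add (star Mr f1 g1) (star Mr f1 g2)) (ser_add (star Mr f2 g1) (star Mr f2 g2))"
  using assms by (subst star_add_left) (simp_all add: star_add_right ser_add_in)

lemma star_monom_mult_left:
  assumes f: "f \<in> ser_in C" and g: "g \<in> ser_in C"
  shows "star Mr (ser_monom_mult z k f) g = ser_monom_mult z k (star Mr f g)"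
proof (intro ext)
  fix n x
  have Mr_monom: "Mr r (ser_monom_mult z k f s) h x = (if k \<le> s then z * Mr r (f (s - k)) h x else 0)"
    if "h \<in> C" for r s h
    using that by (simp add: ser_monom_mult_nth Mr_scale_left Mr_zero_left f ser_inD)
  have "star Mr (ser_monom_mult z k f) g n x =
      (\<Sum>r\<le>n. \<Sum>s\<le>n - r. if k \<le> s then z * Mr r (f (s - k)) (g (n - (r + s))) x else 0)"
    by (simp add: star_nth Mr_monom g ser_inD diff_diff_left)
  also have "\<dots> = (\<Sum>r\<le>n. if k \<le> n - r
      then (\<Sum>s\<le>n - r - k. z * Mr r (f s) (g (n - k - r - s)) x) else 0)"
    by (subst sum_atMost_if_le_shift) (intro sum.cong refl if_cong; simp add: algebra_simps)
  also have "\<dots> = (if k \<le> n then (\<Sum>r\<le>n - k. \<Sum>s\<le>n - r - k. z * Mr r (f s) (g (n - k - r - s)) x) else 0)"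
    by (rule sum_atMost_if_le_diff)
  also have "\<dots> = ser_monom_mult z k (star Mr f g) n x"
    by (simp add: ser_monom_mult_def star_nth sum_distrib_left algebra_simps)
  finally show "star Mr (ser_monom_mult z k f) g n x = ser_monom_mult z k (star Mr f g) n x" .
qed

lemma ser_conj_star:
  assumes f: "f \<in> ser_in C" and g: "g \<in> ser_in C"
  shows "ser_conj (star Mr f g) = star Mr (ser_conj g) (ser_conj f)"
proof (intro ext)
  fix n x
  have cnj_Mr: "cnj (Mr r (f s) (g t) x) = Mr r (ser_conj g t) (ser_conj f s) x" for r s t
    using fun_cong[OF Mr_cnj[OF ser_inD[OF f, of s] ser_inD[OF g, of t], of r], of x]
    by (simp add: ser_conj_def)
  have "ser_conj (star Mr f g) n x =
      (\<Sum>r\<le>n. \<Sum>s\<le>n - r. Mr r (ser_conj g (n - r - s)) (ser_conj f s) x)"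
    by (simp add: star_nth cnj_Mr[unfolded ser_conj_def] ser_conj_def)
  also have "\<dots> = (\<Sum>r\<le>n. \<Sum>s\<le>n - r. Mr r (ser_conj g s) (ser_conj f (n - r - s)) x)"
    by (rule sum.cong[OF refl])
      (use sum_atMost_reflect[of "\<lambda>a b. Mr r (ser_conj g b) (ser_conj f a) x" "n - r" for r] in simp)
  finally show "ser_conj (star Mr f g) n x = star Mr (ser_conj g) (ser_conj f) n x"
    by (simp add: star_nth)
qed

lemma star_monom_mult_right:
  assumes f: "f \<in> ser_in C" and g: "g \<in> ser_in C"
  shows "star Mr f (ser_monom_mult z k g) = ser_monom_mult z k (star Mr f g)"
proof -
  have "star Mr f (ser_monom_mult z k g) = ser_conj (ser_conj (star Mr f (ser_monom_mult z k g)))"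
    by simp
  also have "\<dots> = ser_conj (ser_monom_mult (cnj z) k (star Mr (ser_conj g) (ser_conj f)))"
    by (simp add: ser_conj_star f g ser_monom_mult_in ser_conj_monom_mult star_monom_mult_left ser_conj_in)
  also have "\<dots> = ser_monom_mult z k (star Mr f g)"
    by (simp add: ser_conj_monom_mult ser_conj_star ser_conj_in f g)
  finally show ?thesis .
qed

lemma fsupp_star_terms:
  assumes "f \<in> ser_in C" "g \<in> ser_in C"
  shows "fsupp (star Mr f g n) \<subseteq> (\<Union>r\<le>n. \<Union>s\<le>n - r. fsupp (Mr r (f s) (g (n - r - s))))"
proof -
  have "fsupp (star Mr f g n) \<subseteq> (\<Union>r\<le>n. fsupp (\<lambda>x. \<Sum>s\<le>n - r. Mr r (f s) (g (n - r - s)) x))"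
    unfolding star_nth by (rule fsupp_sum) simp
  also have "\<dots> \<subseteq> (\<Union>r\<le>n. \<Union>s\<le>n - r. fsupp (Mr r (f s) (g (n - r - s))))"
    by (rule UN_mono[OF order_refl fsupp_sum]) simp
  finally show ?thesis .
qed

lemma fsupp_star_left:
  assumes "f \<in> ser_in C" "g \<in> ser_in C"
  shows "fsupp (star Mr f g n) \<subseteq> (\<Union>s\<le>n. fsupp (f s))"
proof (rule order_trans[OF fsupp_star_terms[OF assms]], intro UN_least)
  fix r s assume "r \<in> {..n}" "s \<in> {..n - r}"
  then have "fsupp (f s) \<subseteq> (\<Union>s\<le>n. fsupp (f s))" by (intro fsupp_subset_initial) auto
  then show "fsupp (Mr r (f s) (g (n - r - s))) \<subseteq> (\<Union>s\<le>n. fsupp (f s))"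
    using Mr_fsupp[OF ser_inD[OF assms(1)] ser_inD[OF assms(2)]] by blast
qed

lemma fsupp_star_right:
  assumes "f \<in> ser_in C" "g \<in> ser_in C"
  shows "fsupp (star Mr f g n) \<subseteq> (\<Union>t\<le>n. fsupp (g t))"
proof (rule order_trans[OF fsupp_star_terms[OF assms]], intro UN_least)
  fix r s assume "r \<in> {..n}" "s \<in> {..n - r}"
  then have "fsupp (g (n - r - s)) \<subseteq> (\<Union>t\<le>n. fsupp (g t))" by (intro fsupp_subset_initial) auto
  then show "fsupp (Mr r (f s) (g (n - r - s))) \<subseteq> (\<Union>t\<le>n. fsupp (g t))"
    using Mr_fsupp[OF ser_inD[OF assms(1)] ser_inD[OF assms(2)]] by blast
qed

lemma star_C0_left:
  assumes "f \<in> C0 C U" "g \<in> ser_in C"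
  shows "star Mr f g \<in> C0 C U"
  using C0_dominated[OF star_in[OF C0_ser_in[OF assms(1)] assms(2)] assms(1)
      fsupp_star_left[OF C0_ser_in[OF assms(1)] assms(2)]] .

lemma star_C0_right:
  assumes "f \<in> ser_in C" "g \<in> C0 C U"
  shows "star Mr f g \<in> C0 C U"
  using C0_dominated[OF star_in[OF assms(1) C0_ser_in[OF assms(2)]] assms(2)
      fsupp_star_right[OF assms(1) C0_ser_in[OF assms(2)]]] .

lemma star_eq_zero_if_disjoint:
  "f \<in> ser_in C \<Longrightarrow> g \<in> ser_in C \<Longrightarrow> (\<And>s t. fsupp (f s) \<inter> fsupp (g t) = {}) \<Longrightarrow>
    star Mr f g = ser_zero"
  unfolding star_def ser_zero_def by (simp add: Mr_eq_zero_if_disjoint ser_inD)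

lemma star_zero_left: "g \<in> ser_in C \<Longrightarrow> star Mr ser_zero g = ser_zero"
  by (rule star_eq_zero_if_disjoint[OF ser_zero_in]) (simp_all add: ser_zero_def)

lemma star_nth_cong:
  "(\<And>s. s \<le> N \<Longrightarrow> f s = f' s) \<Longrightarrow> (\<And>t. t \<le> N \<Longrightarrow> g t = g' t) \<Longrightarrow> n \<le> N \<Longrightarrow>
    star Mr f g n = star Mr f' g' n"
  unfolding star_nth by (intro ext sum.cong refl) auto

lemma star_of_fun_one:
  assumes f: "f \<in> ser_in C"
  shows "star Mr (ser_of_fun (\<lambda>_. 1)) f = f"
proof (intro ext)
  fix n x
  have inner: "(\<Sum>s\<le>m. Mr r (ser_of_fun (\<lambda>_. 1) s) (f (m - s)) x) = Mr r (\<lambda>_. 1) (f m) x" for r m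
    by (simp add: sum.atMost_shift ser_of_fun_def Mr_zero_left ser_inD[OF f])
  have "star Mr (ser_of_fun (\<lambda>_. 1)) f n x = (\<Sum>r\<le>n. Mr r (\<lambda>_. 1) (f (n - r)) x)"
    unfolding star_nth by (simp only: inner diff_diff_left[symmetric])
  also have "\<dots> = Mr 0 (\<lambda>_. 1) (f n) x"
    by (simp add: sum.atMost_shift Mr_one_left ser_inD[OF f])
  also have "\<dots> = f n x" by (simp add: Mr_0 C_const ser_inD[OF f])
  finally show "star Mr (ser_of_fun (\<lambda>_. 1)) f n x = f n x" .
qed

end

section \<open>The GNS construction\<close>

lemma rep_in_class:
  assumes "equiv A r" "X \<in> A // r"
  shows "rep X \<in> X"
proof -
  obtain x where "x \<in> X" using in_quotient_imp_non_empty[OF assms] by blast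
  then show ?thesis unfolding rep_def by (rule someI)
qed

lemma fps_nonneg_first_coeff:
  assumes "fps_nonneg P" "\<And>i. i < m \<Longrightarrow> fps_nth P i = 0"
  shows "fps_nth P m \<in> \<real> \<and> 0 \<le> Re (fps_nth P m)"
proof (cases "fps_nth P m = 0")
  case False
  then have "P \<noteq> 0" "subdegree P = m" using subdegreeI[OF False assms(2)] by auto
  then show ?thesis using assms(1) unfolding fps_nonneg_def by auto
qed simp

lemma complex_sesquilinear_nonneg_imp_zero:
  fixes a b :: complex
  assumes "\<And>z. z * a + cnj z * b \<in> \<real> \<and> 0 \<le> Re (z * a + cnj z * b)"
  shows "a = 0" "b = 0"
proof -
  have "Re (a + b) = 0" "Im (a + b) = 0"
    using assms[of 1] assms[of "-1"] by (auto simp: complex_is_Real_iff)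
  moreover have "Re (\<i> * a - \<i> * b) = 0" "Im (\<i> * a - \<i> * b) = 0"
    using assms[of "\<i>"] assms[of "-\<i>"] by (auto simp: complex_is_Real_iff)
  ultimately show "a = 0" "b = 0" by (auto simp: complex_eq_iff)
qed

locale gns_setting = star_algebra C pb Mr
  for C :: "('m::t2_space \<Rightarrow> complex) set" and pb Mr +
  fixes \<omega> :: "(nat \<Rightarrow> 'm \<Rightarrow> complex) \<Rightarrow> complex fps"
  assumes linear: "lambda_linear C \<omega>"
    and positive: "positive_functional C Mr \<omega>"
begin

abbreviation J :: "(nat \<Rightarrow> 'm \<Rightarrow> complex) set" where
  "J \<equiv> gelfand_ideal C Mr \<omega>"

abbreviation R :: "((nat \<Rightarrow> 'm \<Rightarrow> complex) \<times> (nat \<Rightarrow> 'm \<Rightarrow> complex)) set" where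
  "R \<equiv> gns_rel C Mr \<omega>"

lemma omega_add: "f \<in> C0M \<Longrightarrow> g \<in> C0M \<Longrightarrow> \<omega> (ser_add f g) = \<omega> f + \<omega> g"
  using linear unfolding lambda_linear_def by blast

lemma omega_monom_mult: "f \<in> C0M \<Longrightarrow> \<omega> (ser_monom_mult z k f) = fps_const z * fps_X ^ k * \<omega> f"
  using linear ser_smul_monom[of z k f] unfolding lambda_linear_def by metis

lemma omega_monom_mult_nth:
  "f \<in> C0M \<Longrightarrow> fps_nth (\<omega> (ser_monom_mult z k f)) m = (if m < k then 0 else z * fps_nth (\<omega> f) (m - k))"
  by (simp add: omega_monom_mult mult.assoc fps_X_power_mult_nth)

lemma omega_zero: "\<omega> ser_zero = 0"
  using additive_zero[of \<omega>, OF omega_add] .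

lemma omega_nth_cong:
  assumes f: "f \<in> C0M" and g: "g \<in> C0M" and eq: "\<And>k. k \<le> N \<Longrightarrow> f k = g k"
  shows "fps_nth (\<omega> f) N = fps_nth (\<omega> g) N"
proof -
  have trunc: "fps_nth (\<omega> h) N = fps_nth (\<omega> (ser_trunc N h)) N" if h: "h \<in> C0M" for h
  proof -
    define tail where "tail = (\<lambda>k. h (k + Suc N))"
    have tail: "tail \<in> C0M" unfolding tail_def by (rule ser_tail_C0[OF h])
    have "\<omega> h = \<omega> (ser_trunc N h) + \<omega> (ser_monom_mult 1 (Suc N) tail)"
      unfolding tail_def
      by (subst ser_add_trunc_tail[of h N]) (intro omega_add ser_trunc_C0 ser_monom_mult_C0 ser_tail_C0 h)
    then show ?thesis by (simp add: omega_monom_mult_nth[OF tail])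
  qed
  have "ser_trunc N f = ser_trunc N g" using eq by (auto simp: ser_trunc_def fun_eq_iff)
  then show ?thesis using trunc[OF f] trunc[OF g] by simp
qed

lemma omega_nonneg: "f \<in> C0M \<Longrightarrow> fps_nonneg (\<omega> (star Mr (ser_conj f) f))"
  using positive unfolding positive_functional_def by blast

lemma star_conj_C0M: "f \<in> C0M \<Longrightarrow> g \<in> C0M \<Longrightarrow> star Mr (ser_conj f) g \<in> C0M"
  by (intro star_C0_right ser_conj_in C0_ser_in)

lemma omega_perturbation_nth:
  fixes z :: complex and k :: nat
  assumes j: "j \<in> C0M" and g: "g \<in> C0M"
  defines "u \<equiv> ser_add j (ser_monom_mult z k g)"
  shows "fps_nth (\<omega> (star Mr (ser_conj u) u)) m =
     fps_nth (\<omega> (star Mr (ser_conj j) j)) m +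
     (if m < k then 0 else z * fps_nth (\<omega> (star Mr (ser_conj j) g)) (m - k)) +
     ((if m < k then 0 else cnj z * fps_nth (\<omega> (star Mr (ser_conj g) j)) (m - k)) +
      (if m < k then 0 else z * (if m - k < k then 0
         else cnj z * fps_nth (\<omega> (star Mr (ser_conj g) g)) (m - k - k))))"
proof -
  have ser: "j \<in> ser_in C" "g \<in> ser_in C" "ser_conj j \<in> ser_in C" "ser_conj g \<in> ser_in C"
    using j g by (auto intro: C0_ser_in ser_conj_in)
  have "star Mr (ser_conj u) u =
     ser_add (ser_add (star Mr (ser_conj j) j) (ser_monom_mult z k (star Mr (ser_conj j) g)))
       (ser_add (ser_monom_mult (cnj z) k (star Mr (ser_conj g) j))
         (ser_monom_mult z k (ser_monom_mult (cnj z) k (star Mr (ser_conj g) g))))"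
    unfolding u_def
    by (simp add: ser_conj_add ser_conj_monom_mult star_add_add ser ser_monom_mult_in
        star_monom_mult_left star_monom_mult_right)
  then show ?thesis
    by (simp add: omega_add ser_add_C0 ser_monom_mult_C0 star_conj_C0M j g omega_monom_mult_nth)
qed

(* Positivity on u = j + z lambda^(d+1) g, with d the first degree where omega(conj j * g) or
   omega(conj g * j) is nonzero: the lowest possibly nonzero coefficient of omega(conj u * u) is
   z c_d + conj z c'_d, and it must be real and nonnegative for every z. *)
lemma null_vector_orthogonal:
  assumes j: "j \<in> C0M" and null: "\<omega> (star Mr (ser_conj j) j) = 0" and g: "g \<in> C0M"
  shows "\<omega> (star Mr (ser_conj j) g) = 0 \<and> \<omega> (star Mr (ser_conj g) j) = 0"
proof (rule ccontr)
  define c where "c = \<omega> (star Mr (ser_conj j) g)"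
  define c' where "c' = \<omega> (star Mr (ser_conj g) j)"
  assume "\<not> (\<omega> (star Mr (ser_conj j) g) = 0 \<and> \<omega> (star Mr (ser_conj g) j) = 0)"
  then have "\<exists>n. fps_nth c n \<noteq> 0 \<or> fps_nth c' n \<noteq> 0"
    unfolding c_def c'_def by (auto simp: fps_eq_iff)
  define d where "d = (LEAST n. fps_nth c n \<noteq> 0 \<or> fps_nth c' n \<noteq> 0)"
  have d: "fps_nth c d \<noteq> 0 \<or> fps_nth c' d \<noteq> 0"
    unfolding d_def by (rule LeastI_ex) fact
  have below_d: "fps_nth c i = 0 \<and> fps_nth c' i = 0" if "i < d" for i
    using not_less_Least[OF that[unfolded d_def]] by blast
  have "z * fps_nth c d + cnj z * fps_nth c' d \<in> \<real> \<and> 0 \<le> Re (z * fps_nth c d + cnj z * fps_nth c' d)"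
    for z
  proof -
    define u where "u = ser_add j (ser_monom_mult z (Suc d) g)"
    have coeff: "fps_nth (\<omega> (star Mr (ser_conj u) u)) m =
        (if m < Suc d then 0 else z * fps_nth c (m - Suc d)) +
        ((if m < Suc d then 0 else cnj z * fps_nth c' (m - Suc d)) +
         (if m < Suc d then 0 else z * (if m - Suc d < Suc d then 0
            else cnj z * fps_nth (\<omega> (star Mr (ser_conj g) g)) (m - Suc d - Suc d))))" for m
      using omega_perturbation_nth[OF j g, of z "Suc d" m] by (simp add: u_def c_def c'_def null)
    have "fps_nonneg (\<omega> (star Mr (ser_conj u) u))"
      unfolding u_def by (intro omega_nonneg ser_add_C0 ser_monom_mult_C0 j g)
    moreover have "fps_nth (\<omega> (star Mr (ser_conj u) u)) i = 0" if "i < Suc d + d" for i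
      using that below_d[of "i - Suc d"] by (auto simp: coeff)
    ultimately have "fps_nth (\<omega> (star Mr (ser_conj u) u)) (Suc d + d) \<in> \<real> \<and>
        0 \<le> Re (fps_nth (\<omega> (star Mr (ser_conj u) u)) (Suc d + d))"
      by (rule fps_nonneg_first_coeff)
    then show ?thesis by (simp add: coeff)
  qed
  then have "fps_nth c d = 0" "fps_nth c' d = 0"
    by (rule complex_sesquilinear_nonneg_imp_zero)+
  then show False using d by simp
qed

lemma gelfand_ideal_iff: "j \<in> J \<longleftrightarrow> j \<in> C0M \<and> \<omega> (star Mr (ser_conj j) j) = 0"
  by (simp add: gelfand_ideal_def)

lemma gelfand_ideal_orthogonal_left: "j \<in> J \<Longrightarrow> h \<in> C0M \<Longrightarrow> \<omega> (star Mr (ser_conj j) h) = 0"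
  using null_vector_orthogonal by (simp add: gelfand_ideal_iff)

lemma gelfand_ideal_orthogonal_right: "j \<in> J \<Longrightarrow> h \<in> C0M \<Longrightarrow> \<omega> (star Mr h j) = 0"
  using null_vector_orthogonal[of j "ser_conj h"] ser_conj_C0[of h] by (simp add: gelfand_ideal_iff)

lemma gelfand_ideal_add:
  assumes "j1 \<in> J" "j2 \<in> J"
  shows "ser_add j1 j2 \<in> J"
proof -
  have C0M: "j1 \<in> C0M" "j2 \<in> C0M" using assms by (auto simp: gelfand_ideal_iff)
  then have ser: "j1 \<in> ser_in C" "j2 \<in> ser_in C" "ser_conj j1 \<in> ser_in C" "ser_conj j2 \<in> ser_in C"
    by (auto intro: C0_ser_in ser_conj_in)
  have "\<omega> (star Mr (ser_conj (ser_add j1 j2)) (ser_add j1 j2)) = 0"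
    unfolding ser_conj_add star_add_add[OF ser(3,4,1,2)]
    by (simp add: omega_add ser_add_C0 star_conj_C0M C0M gelfand_ideal_orthogonal_left assms)
  then show ?thesis using ser_add_C0[OF C0M] by (simp add: gelfand_ideal_iff)
qed

lemma gelfand_ideal_monom_mult:
  assumes "j \<in> J"
  shows "ser_monom_mult z k j \<in> J"
proof -
  have C0M: "j \<in> C0M" and null: "\<omega> (star Mr (ser_conj j) j) = 0"
    using assms by (auto simp: gelfand_ideal_iff)
  then have ser: "j \<in> ser_in C" "ser_conj j \<in> ser_in C" by (auto intro: C0_ser_in ser_conj_in)
  have "\<omega> (star Mr (ser_conj (ser_monom_mult z k j)) (ser_monom_mult z k j)) = 0"
    unfolding ser_conj_monom_mult
    by (simp add: star_monom_mult_left star_monom_mult_right ser ser_monom_mult_in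
        omega_monom_mult ser_monom_mult_C0 star_conj_C0M C0M null)
  then show ?thesis using ser_monom_mult_C0[OF C0M] by (simp add: gelfand_ideal_iff)
qed

lemma ser_zero_in_gelfand_ideal: "ser_zero \<in> J"
  by (simp add: gelfand_ideal_iff ser_zero_C0 ser_conj_zero star_zero_left ser_zero_in omega_zero)

lemma gns_rel_iff: "(f, g) \<in> R \<longleftrightarrow> f \<in> C0M \<and> g \<in> C0M \<and> ser_diff f g \<in> J"
  by (simp add: gns_rel_def)

lemma equiv_gns_rel: "equiv C0M R"
proof (rule equivI)
  show "R \<subseteq> C0M \<times> C0M" by (auto simp: gns_rel_iff)
  show "refl_on C0M R" by (auto simp: refl_on_def gns_rel_iff ser_diff_self ser_zero_in_gelfand_ideal)
  show "sym R"
  proof (rule symI)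
    fix f g assume "(f, g) \<in> R"
    then show "(g, f) \<in> R"
      unfolding gns_rel_iff ser_diff_swap[of g f] using gelfand_ideal_monom_mult by blast
  qed
  show "trans R"
  proof (rule transI)
    fix f g h assume "(f, g) \<in> R" "(g, h) \<in> R"
    then show "(f, h) \<in> R"
      unfolding gns_rel_iff ser_diff_trans[of f h g] using gelfand_ideal_add by blast
  qed
qed

lemma gns_rel_sym: "(f, g) \<in> R \<Longrightarrow> (g, f) \<in> R"
  using equiv_gns_rel unfolding equiv_def sym_def by blast

lemma gns_relE:
  assumes "(f, f') \<in> R"
  obtains j where "j \<in> J" "f' = ser_add f j"
proof -
  have "ser_diff f' f \<in> J" using gns_rel_sym[OF assms] by (simp add: gns_rel_iff)
  then show ?thesis using that ser_add_diff[of f' f] by blast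
qed

lemma omega_inner_cong:
  assumes "(f, f') \<in> R" "(g, g') \<in> R"
  shows "\<omega> (star Mr (ser_conj f') g') = \<omega> (star Mr (ser_conj f) g)"
proof -
  obtain j k where j: "j \<in> J" "f' = ser_add f j" and k: "k \<in> J" "g' = ser_add g k"
    using assms by (blast elim: gns_relE)
  have C0M: "f \<in> C0M" "g \<in> C0M" "j \<in> C0M" "k \<in> C0M"
    using assms j k by (auto simp: gns_rel_iff gelfand_ideal_iff)
  then have ser: "ser_conj f \<in> ser_in C" "ser_conj j \<in> ser_in C" "g \<in> ser_in C" "k \<in> ser_in C"
    by (auto intro: C0_ser_in ser_conj_in)
  show ?thesis
    unfolding j(2) k(2) ser_conj_add star_add_add[OF ser]
    by (simp add: omega_add ser_add_C0 star_conj_C0M C0M gelfand_ideal_orthogonal_left j(1)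
        gelfand_ideal_orthogonal_right k(1) ser_conj_C0)
qed

lemma omega_vec_cong:
  assumes "(f, f') \<in> R" "g \<in> ser_in C"
  shows "omega_vec Mr \<omega> f' g = omega_vec Mr \<omega> f g"
proof -
  obtain j where j: "j \<in> J" "f' = ser_add f j"
    using assms(1) by (blast elim: gns_relE)
  have C0M: "f \<in> C0M" "j \<in> C0M" using assms j by (auto simp: gns_rel_iff gelfand_ideal_iff)
  then have ser: "ser_conj f \<in> ser_in C" "ser_conj j \<in> ser_in C" "f \<in> ser_in C" "j \<in> ser_in C"
    by (auto intro: C0_ser_in ser_conj_in)
  have fg: "star Mr (ser_conj f) g \<in> C0M" by (intro star_C0_left ser_conj_C0 C0M assms(2))
  have terms: "star Mr (star Mr (ser_conj f) g) f \<in> C0M" "star Mr (star Mr (ser_conj f) g) j \<in> C0M"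
    "star Mr (star Mr (ser_conj j) g) f \<in> C0M" "star Mr (star Mr (ser_conj j) g) j \<in> C0M"
    by (intro star_C0_right star_in ser assms(2) C0M)+
  have "\<omega> (star Mr (star Mr (ser_conj f) g) j) = 0"
    by (rule gelfand_ideal_orthogonal_right[OF j(1) fg])
  moreover have "\<omega> (star Mr (star Mr (ser_conj j) g) h) = 0" if "h \<in> C0M" for h
  proof -
    have "star Mr (star Mr (ser_conj j) g) h = star Mr (ser_conj j) (star Mr g h)"
      using that by (intro star_assoc ser assms(2) C0_ser_in)
    then show ?thesis
      using gelfand_ideal_orthogonal_left[OF j(1) star_C0_right[OF assms(2) that]] by simp
  qed
  ultimately show ?thesis
    unfolding omega_vec_def j(2) ser_conj_add star_add_left[OF ser(1,2) assms(2)]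
      star_add_add[OF star_in[OF ser(1) assms(2)] star_in[OF ser(2) assms(2)] ser(3,4)]
    by (simp add: omega_add ser_add_C0 terms C0M)
qed

lemma rep_psi: "f \<in> C0M \<Longrightarrow> (f, rep (psi C Mr \<omega> f)) \<in> R"
  using rep_in_class[OF equiv_gns_rel quotientI[of f C0M R]] by (simp add: psi_def)

lemma psi_eqI: "(f, g) \<in> R \<Longrightarrow> psi C Mr \<omega> f = psi C Mr \<omega> g"
  unfolding psi_def by (rule equiv_class_eq[OF equiv_gns_rel])

lemma psi_eq_iff: "f \<in> C0M \<Longrightarrow> g \<in> C0M \<Longrightarrow> psi C Mr \<omega> f = psi C Mr \<omega> g \<longleftrightarrow> (f, g) \<in> R"
  unfolding psi_def by (rule eq_equiv_class_iff[OF equiv_gns_rel])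

lemma psi_in_gns_space: "f \<in> C0M \<Longrightarrow> psi C Mr \<omega> f \<in> gns_space C Mr \<omega>"
  unfolding psi_def gns_space_def by (rule quotientI)

lemma gns_spaceE:
  assumes "\<Psi> \<in> gns_space C Mr \<omega>"
  obtains f where "f \<in> C0M" "\<Psi> = psi C Mr \<omega> f"
  using assms unfolding psi_def gns_space_def by (rule quotientE)

lemma gns_inner_psi:
  "f \<in> C0M \<Longrightarrow> g \<in> C0M \<Longrightarrow>
    gns_inner Mr \<omega> (psi C Mr \<omega> f) (psi C Mr \<omega> g) = \<omega> (star Mr (ser_conj f) g)"
  unfolding gns_inner_def by (rule omega_inner_cong[OF rep_psi rep_psi])

lemma vec_supp_psi: "f \<in> C0M \<Longrightarrow> vec_supp C Mr \<omega> (psi C Mr \<omega> f) = func_supp C (omega_vec Mr \<omega> f)"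
  unfolding vec_supp_def by (rule func_supp_cong) (rule omega_vec_cong[OF rep_psi])

section \<open>Local GNS spaces\<close>

lemma func_supp_omega_vec_subset:
  assumes f: "f \<in> C0M"
  shows "func_supp C (omega_vec Mr \<omega> f) \<subseteq> ser_supp f"
proof -
  have "func_supp C (omega_vec Mr \<omega> f) \<subseteq> - (- ser_supp f)"
  proof (rule func_supp_subset)
    show "open (- ser_supp f)" by (simp add: ser_supp_def open_Compl)
    show "\<forall>g\<in>C0 C (- ser_supp f). omega_vec Mr \<omega> f g = 0"
    proof
      fix g assume g: "g \<in> C0 C (- ser_supp f)"
      have "star Mr (ser_conj f) g = ser_zero"
        using fsupp_subset_ser_supp[of f] C0_fsupp_subset[OF g]
        by (intro star_eq_zero_if_disjoint ser_conj_in C0_ser_in[OF f] C0_ser_in[OF g])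
          (force simp: ser_conj_def)
      then show "omega_vec Mr \<omega> f g = 0"
        by (simp add: omega_vec_def star_zero_left C0_ser_in[OF f] omega_zero)
    qed
  qed
  then show ?thesis by simp
qed

lemma psi_in_gns_local:
  assumes "f \<in> A0 C U"
  shows "psi C Mr \<omega> f \<in> gns_local C Mr \<omega> U"
  using func_supp_omega_vec_subset[OF A0_C0M[OF assms]] A0_ser_supp[OF assms]
    psi_in_gns_space[OF A0_C0M[OF assms]]
  unfolding gns_local_def by (simp add: vec_supp_psi A0_C0M[OF assms])

lemma omega_vec_add:
  assumes f: "f \<in> C0M" and g: "g \<in> C0M" and h: "h \<in> C0M"
  shows "omega_vec Mr \<omega> f (ser_add g h) = omega_vec Mr \<omega> f g + omega_vec Mr \<omega> f h"
proof -
  have ser: "ser_conj f \<in> ser_in C" "f \<in> ser_in C" "g \<in> ser_in C" "h \<in> ser_in C"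
    using f g h by (auto intro: C0_ser_in ser_conj_in)
  have "star Mr (star Mr (ser_conj f) g) f \<in> C0M" "star Mr (star Mr (ser_conj f) h) f \<in> C0M"
    by (intro star_C0_right star_in ser f)+
  then show ?thesis
    unfolding omega_vec_def by (simp add: star_add_right star_add_left star_in ser omega_add)
qed

lemma omega_vec_nth_cong:
  assumes f: "f \<in> C0M" and g: "g \<in> ser_in C" and h: "h \<in> ser_in C"
    and eq: "\<And>k. k \<le> n \<Longrightarrow> star Mr (ser_conj f) g k = star Mr (ser_conj f) h k"
  shows "fps_nth (omega_vec Mr \<omega> f g) n = fps_nth (omega_vec Mr \<omega> f h) n"
proof -
  have ser: "ser_conj f \<in> ser_in C" "f \<in> ser_in C" using f by (auto intro: C0_ser_in ser_conj_in)
  show ?thesis unfolding omega_vec_def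
  proof (rule omega_nth_cong)
    show "star Mr (star Mr (ser_conj f) g) f \<in> C0M" "star Mr (star Mr (ser_conj f) h) f \<in> C0M"
      by (intro star_C0_right star_in ser g h f)+
    show "star Mr (star Mr (ser_conj f) g) f k = star Mr (star Mr (ser_conj f) h) f k" if "k \<le> n" for k
      by (rule star_nth_cong[OF _ _ that]) (simp_all add: eq)
  qed
qed

lemma omega_vec_nth_fun_mult:
  assumes f: "f \<in> C0M" and h: "h \<in> ser_in C"
    and \<phi>: "\<phi> \<in> C" "open W" "(\<Union>k\<le>n. fsupp (f k)) \<subseteq> W" "\<And>x. x \<in> W \<Longrightarrow> \<phi> x = 1"
  shows "fps_nth (omega_vec Mr \<omega> f h) n = fps_nth (omega_vec Mr \<omega> f (ser_fun_mult \<phi> h)) n"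
proof -
  define h1 where "h1 = ser_fun_mult \<phi> h"
  define h2 where "h2 = ser_fun_mult (\<lambda>x. 1 - \<phi> x) h"
  have ser: "ser_conj f \<in> ser_in C" "h1 \<in> ser_in C" "h2 \<in> ser_in C"
    unfolding h1_def h2_def using f h \<phi>(1) by (auto intro: C0_ser_in ser_conj_in ser_fun_mult_in C_one_minus)
  have split: "h t = (\<lambda>x. h1 t x + h2 t x)" for t
    using fun_cong[OF ser_add_fun_mult_one_minus[of \<phi> h], of t]
    unfolding h1_def h2_def ser_add_def by simp
  have disjoint: "fsupp (ser_conj f s) \<inter> fsupp (h2 t) = {}" if "s \<le> n" for s t
  proof -
    have "fsupp (f s) \<subseteq> W" using \<phi>(3) fsupp_subset_initial[OF that] by blast
    moreover have "fsupp (h2 t) \<subseteq> - W"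
      using fsupp_ser_fun_mult[of "\<lambda>x. 1 - \<phi> x" h t] fsupp_one_minus_subset[of W \<phi>, OF \<phi>(2,4)]
      unfolding h2_def by blast
    ultimately show ?thesis by (auto simp: ser_conj_def)
  qed
  have "Mr r (ser_conj f s) (h t) = Mr r (ser_conj f s) (h1 t)" if "s \<le> n" for r s t
    unfolding split[of t] using ser
    by (intro Mr_add_right_disjoint ser_inD disjoint[OF that])
  then have "star Mr (ser_conj f) h k = star Mr (ser_conj f) h1 k" if "k \<le> n" for k
    unfolding star_nth using that by (intro ext sum.cong refl) simp
  then show ?thesis
    unfolding h1_def by (rule omega_vec_nth_cong[OF f h ser(2)[unfolded h1_def]])
qed

lemma omega_vec_vanishes_off_func_supp:
  assumes f: "f \<in> C0M" and h: "h \<in> ser_in C"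
    and V: "func_supp C (omega_vec Mr \<omega> f) \<subseteq> V" and hV: "\<And>n. fsupp (h n) \<subseteq> - V"
  shows "omega_vec Mr \<omega> f h = 0"
proof (rule fps_ext)
  fix n
  obtain \<phi> W where \<phi>: "\<phi> \<in> C" "open W" "(\<Union>k\<le>n. fsupp (f k)) \<subseteq> W" "\<And>x. x \<in> W \<Longrightarrow> \<phi> x = 1"
    "compact (fsupp \<phi>)"
    using smooth_bump_compact[OF compact_C0_initial_supp[OF f]] by blast
  have "omega_vec Mr \<omega> f (ser_fun_mult \<phi> h) = 0"
  proof (rule vanishes_off_func_supp)
    show "ser_fun_mult \<phi> h \<in> C0 C (- func_supp C (omega_vec Mr \<omega> f))"
      unfolding C0_def
    proof (intro CollectI conjI allI ser_fun_mult_in \<phi>(1) h)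
      fix k
      have "fsupp (ser_fun_mult \<phi> h k) \<subseteq> fsupp \<phi> \<inter> fsupp (h k)" by (rule fsupp_ser_fun_mult)
      then show "compact (fsupp (ser_fun_mult \<phi> h k))"
        "fsupp (ser_fun_mult \<phi> h k) \<subseteq> - func_supp C (omega_vec Mr \<omega> f)"
        using compact_fsupp_subset[OF \<phi>(5)] hV[of k] V by blast+
    qed
    show "omega_vec Mr \<omega> f (ser_add g g') = omega_vec Mr \<omega> f g + omega_vec Mr \<omega> f g'"
      if "g \<in> C0M" "g' \<in> C0M" for g g'
      using that by (rule omega_vec_add[OF f])
    show "fps_nth (omega_vec Mr \<omega> f g) m = fps_nth (omega_vec Mr \<omega> f g') m"
      if "g \<in> C0M" "g' \<in> C0M" "\<And>k. k \<le> m \<Longrightarrow> g k = g' k" for g g' m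
      using that by (intro omega_vec_nth_cong[OF f] C0_ser_in star_nth_cong) auto
  qed
  then show "fps_nth (omega_vec Mr \<omega> f h) n = fps_nth 0 n"
    using omega_vec_nth_fun_mult[OF f h \<phi>(1-4)] by simp
qed

(* The difference is e = (1 - phi) * f, and
   omega(conj e * e) = omega_f(conj (1 - phi) * (1 - phi)) vanishes because the argument of
   omega_f is supported off V. *)
lemma gns_rel_cutoff:
  assumes f: "f \<in> C0M"
    and \<phi>: "\<phi> \<in> C" "open V" "func_supp C (omega_vec Mr \<omega> f) \<subseteq> V" "\<And>x. x \<in> V \<Longrightarrow> \<phi> x = 1"
  shows "(f, star Mr (ser_of_fun \<phi>) f) \<in> R"
proof -
  define e0 where "e0 = ser_of_fun (\<lambda>x. 1 - \<phi> x)"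
  define e where "e = star Mr e0 f"
  have ser: "f \<in> ser_in C" "ser_conj f \<in> ser_in C" "e0 \<in> ser_in C" "ser_conj e0 \<in> ser_in C"
    unfolding e0_def using f \<phi>(1) by (auto intro: C0_ser_in ser_of_fun_in ser_conj_in C_one_minus)
  have "f = star Mr (ser_add e0 (ser_of_fun \<phi>)) f"
    using star_of_fun_one[OF ser(1)] by (simp add: e0_def ser_add_of_fun)
  then have "f = ser_add e (star Mr (ser_of_fun \<phi>) f)"
    unfolding e_def by (simp add: star_add_left ser ser_of_fun_in \<phi>(1))
  then have diff: "ser_diff f (star Mr (ser_of_fun \<phi>) f) = e"
    by (simp add: ser_diff_def ser_add_def fun_eq_iff)
  have "star Mr (ser_conj e) e = star Mr (star Mr (star Mr (ser_conj f) (ser_conj e0)) e0) f"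
    unfolding e_def by (simp add: ser_conj_star ser star_assoc star_in)
  also have "\<dots> = star Mr (star Mr (ser_conj f) (star Mr (ser_conj e0) e0)) f"
    by (simp add: star_assoc ser)
  finally have "\<omega> (star Mr (ser_conj e) e) = omega_vec Mr \<omega> f (star Mr (ser_conj e0) e0)"
    by (simp add: omega_vec_def)
  also have "\<dots> = 0"
  proof (rule omega_vec_vanishes_off_func_supp[OF f star_in[OF ser(4,3)] \<phi>(3)])
    show "fsupp (star Mr (ser_conj e0) e0 n) \<subseteq> - V" for n
      using fsupp_star_right[OF ser(4,3), of n] fsupp_ser_of_fun[of "\<lambda>x. 1 - \<phi> x"]
        fsupp_one_minus_subset[of V \<phi>, OF \<phi>(2,4)]
      unfolding e0_def by blast
  qed
  finally show ?thesis
    using f star_C0_right[OF ser(3) f] star_C0_right[OF ser_of_fun_in[OF \<phi>(1)] f] diff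
    by (simp add: gns_rel_iff gelfand_ideal_iff e_def)
qed

lemma gns_local_representative:
  assumes U: "open U" and \<Psi>: "\<Psi> \<in> gns_local C Mr \<omega> U"
  obtains g where "g \<in> A0 C U" "\<Psi> = psi C Mr \<omega> g"
proof -
  obtain f where f: "f \<in> C0M" "\<Psi> = psi C Mr \<omega> f"
    using \<Psi> by (auto simp: gns_local_def elim: gns_spaceE)
  have "func_supp C (omega_vec Mr \<omega> f) \<subseteq> U"
    using \<Psi> f by (simp add: gns_local_def vec_supp_psi)
  then obtain \<phi> V where \<phi>: "\<phi> \<in> C" "open V" "func_supp C (omega_vec Mr \<omega> f) \<subseteq> V"
    "\<And>x. x \<in> V \<Longrightarrow> \<phi> x = 1" "fsupp \<phi> \<subseteq> U"
    using smooth_urysohn[OF closed_func_supp U] by blast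
  define g where "g = star Mr (ser_of_fun \<phi>) f"
  have g: "g \<in> C0M" unfolding g_def by (rule star_C0_right[OF ser_of_fun_in[OF \<phi>(1)] f(1)])
  have "g \<in> A0 C U"
  proof (rule A0I[where F = "fsupp \<phi>"])
    show "g \<in> ser_in C" "compact (fsupp (g n))" for n using g by (auto intro: C0_ser_in C0_compact)
    show "fsupp (g n) \<subseteq> fsupp \<phi>" for n
      using fsupp_star_left[OF ser_of_fun_in[OF \<phi>(1)] C0_ser_in[OF f(1)], of n] fsupp_ser_of_fun[of \<phi>]
      unfolding g_def by blast
  qed (simp_all add: \<phi>(5))
  moreover have "\<Psi> = psi C Mr \<omega> g"
    unfolding f(2) g_def by (rule psi_eqI[OF gns_rel_cutoff[OF f(1) \<phi>(1-4)]])
  ultimately show ?thesis by (rule that)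
qed

abbreviation L :: "'m set \<Rightarrow> ((nat \<Rightarrow> 'm \<Rightarrow> complex) \<times> (nat \<Rightarrow> 'm \<Rightarrow> complex)) set" where
  "L U \<equiv> loc_rel C Mr \<omega> U"

lemma loc_rel_iff: "(f, g) \<in> L U \<longleftrightarrow> f \<in> A0 C U \<and> g \<in> A0 C U \<and> (f, g) \<in> R"
  by (auto simp: loc_rel_def gns_rel_iff ser_diff_A0 A0_C0M)

lemma equiv_loc_rel: "equiv (A0 C U) (L U)"
proof (rule equivI)
  show "L U \<subseteq> A0 C U \<times> A0 C U" by (auto simp: loc_rel_iff)
  show "refl_on (A0 C U) (L U)"
    using equiv_gns_rel unfolding refl_on_def equiv_def by (auto simp: loc_rel_iff A0_C0M)
  show "sym (L U)"
    using gns_rel_sym unfolding sym_def by (auto simp: loc_rel_iff)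
  show "trans (L U)"
    using equiv_gns_rel unfolding trans_def equiv_def by (auto simp: loc_rel_iff)
qed

lemma rep_loc_quot: "X \<in> loc_quot C Mr \<omega> U \<Longrightarrow> rep X \<in> X \<and> rep X \<in> A0 C U"
  using rep_in_class[OF equiv_loc_rel] in_quotient_imp_subset[OF equiv_loc_rel]
  unfolding loc_quot_def by blast

lemma psi_rep_loc_class:
  assumes "f \<in> A0 C U"
  shows "psi C Mr \<omega> (rep (L U `` {f})) = psi C Mr \<omega> f"
proof -
  have "(f, rep (L U `` {f})) \<in> R"
    using rep_in_class[OF equiv_loc_rel quotientI[OF assms]] by (simp add: loc_rel_iff)
  then show ?thesis by (rule psi_eqI[symmetric])
qed

lemma inj_on_psi_rep_loc_quot: "inj_on (\<lambda>X. psi C Mr \<omega> (rep X)) (loc_quot C Mr \<omega> U)"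
proof (rule inj_onI)
  fix X Y assume X: "X \<in> loc_quot C Mr \<omega> U" and Y: "Y \<in> loc_quot C Mr \<omega> U"
    and eq: "psi C Mr \<omega> (rep X) = psi C Mr \<omega> (rep Y)"
  have A0: "rep X \<in> A0 C U" "rep Y \<in> A0 C U" using rep_loc_quot[OF X] rep_loc_quot[OF Y] by blast+
  then have "(rep X, rep Y) \<in> L U"
    using eq psi_eq_iff[OF A0_C0M[OF A0(1)] A0_C0M[OF A0(2)]] by (simp add: loc_rel_iff)
  then show "X = Y"
    using quotient_eq_iff[OF equiv_loc_rel X[unfolded loc_quot_def] Y[unfolded loc_quot_def]]
      rep_loc_quot[OF X] rep_loc_quot[OF Y] by blast
qed

lemma psi_rep_image_loc_quot:
  assumes "open U"
  shows "(\<lambda>X. psi C Mr \<omega> (rep X)) ` loc_quot C Mr \<omega> U = gns_local C Mr \<omega> U"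
proof
  show "(\<lambda>X. psi C Mr \<omega> (rep X)) ` loc_quot C Mr \<omega> U \<subseteq> gns_local C Mr \<omega> U"
    using rep_loc_quot psi_in_gns_local by blast
  show "gns_local C Mr \<omega> U \<subseteq> (\<lambda>X. psi C Mr \<omega> (rep X)) ` loc_quot C Mr \<omega> U"
  proof
    fix \<Psi> assume "\<Psi> \<in> gns_local C Mr \<omega> U"
    then obtain g where g: "g \<in> A0 C U" "\<Psi> = psi C Mr \<omega> g"
      using gns_local_representative[OF assms] by blast
    then have "\<Psi> = psi C Mr \<omega> (rep (L U `` {g}))" by (simp add: psi_rep_loc_class)
    moreover have "L U `` {g} \<in> loc_quot C Mr \<omega> U" unfolding loc_quot_def by (rule quotientI[OF g(1)])
    ultimately show "\<Psi> \<in> (\<lambda>X. psi C Mr \<omega> (rep X)) ` loc_quot C Mr \<omega> U" by blast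
  qed
qed

lemma gns_inner_psi_rep:
  assumes "X \<in> loc_quot C Mr \<omega> U" "Y \<in> loc_quot C Mr \<omega> U"
  shows "gns_inner Mr \<omega> (psi C Mr \<omega> (rep X)) (psi C Mr \<omega> (rep Y)) = loc_inner Mr \<omega> X Y"
proof -
  have "rep X \<in> A0 C U" "rep Y \<in> A0 C U" using rep_loc_quot assms by blast+
  then show ?thesis unfolding loc_inner_def by (intro gns_inner_psi A0_C0M)
qed

lemma loc_quot_isometric_gns_local:
  assumes "open U"
  shows "\<exists>\<Phi>. bij_betw \<Phi> (loc_quot C Mr \<omega> U) (gns_local C Mr \<omega> U) \<and>
    (\<forall>f\<in>A0 C U. \<Phi> (L U `` {f}) = psi C Mr \<omega> f) \<and>
    (\<forall>X\<in>loc_quot C Mr \<omega> U. \<forall>Y\<in>loc_quot C Mr \<omega> U.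
       gns_inner Mr \<omega> (\<Phi> X) (\<Phi> Y) = loc_inner Mr \<omega> X Y)"
proof (intro exI conjI ballI)
  show "bij_betw (\<lambda>X. psi C Mr \<omega> (rep X)) (loc_quot C Mr \<omega> U) (gns_local C Mr \<omega> U)"
    by (rule bij_betw_imageI[OF inj_on_psi_rep_loc_quot psi_rep_image_loc_quot[OF assms]])
qed (simp_all add: psi_rep_loc_class gns_inner_psi_rep)

lemma gns_local_orthogonal:
  assumes "open U" "open V" "U \<inter> V = {}"
    and "\<Psi> \<in> gns_local C Mr \<omega> U" "\<Phi> \<in> gns_local C Mr \<omega> V"
  shows "gns_inner Mr \<omega> \<Psi> \<Phi> = 0"
proof -
  obtain f where f: "f \<in> A0 C U" "\<Psi> = psi C Mr \<omega> f"
    using gns_local_representative[OF assms(1,4)] .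
  obtain g where g: "g \<in> A0 C V" "\<Phi> = psi C Mr \<omega> g"
    using gns_local_representative[OF assms(2,5)] .
  have "fsupp (ser_conj f s) \<inter> fsupp (g t) = {}" for s t
    using fsupp_subset_ser_supp[of f s] fsupp_subset_ser_supp[of g t] A0_ser_supp[OF f(1)]
      A0_ser_supp[OF g(1)] assms(3)
    by (simp add: ser_conj_def) blast
  then have "star Mr (ser_conj f) g = ser_zero"
    using f(1) g(1) by (intro star_eq_zero_if_disjoint ser_conj_in C0_ser_in[OF A0_C0M])
  then show ?thesis
    unfolding f(2) g(2) gns_inner_psi[OF A0_C0M[OF f(1)] A0_C0M[OF g(1)]] by (simp add: omega_zero)
qed

lemma gns_local_off_func_supp:
  assumes "open U" "U \<inter> func_supp C \<omega> = {}"
  shows "gns_local C Mr \<omega> U = {psi C Mr \<omega> ser_zero}"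
proof
  show "gns_local C Mr \<omega> U \<subseteq> {psi C Mr \<omega> ser_zero}"
  proof
    fix \<Psi> assume "\<Psi> \<in> gns_local C Mr \<omega> U"
    then obtain g where g: "g \<in> A0 C U" "\<Psi> = psi C Mr \<omega> g"
      using gns_local_representative[OF assms(1)] by blast
    have "star Mr (ser_conj g) g \<in> C0 C U"
      using A0_subset_C0[of C U] g(1) by (blast intro: star_C0_right ser_conj_in C0_ser_in)
    then have "star Mr (ser_conj g) g \<in> C0 C (- func_supp C \<omega>)"
      by (rule C0_mono[rotated]) (use assms(2) in blast)
    then have "\<omega> (star Mr (ser_conj g) g) = 0"
      by (rule vanishes_off_func_supp[OF omega_add omega_nth_cong, rotated -1]) auto
    then have "(g, ser_zero) \<in> R"
      using A0_C0M[OF g(1)] ser_zero_C0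
      by (simp add: gns_rel_iff gelfand_ideal_iff ser_diff_def ser_zero_def)
    then show "\<Psi> \<in> {psi C Mr \<omega> ser_zero}"
      using g(2) psi_eq_iff[OF A0_C0M[OF g(1)] ser_zero_C0] by simp
  qed
  have "omega_vec Mr \<omega> ser_zero h = 0" if "h \<in> ser_in C" for h
    by (simp add: omega_vec_def ser_conj_zero star_zero_left that ser_zero_in omega_zero)
  then have "func_supp C (omega_vec Mr \<omega> ser_zero) \<subseteq> - UNIV"
    by (intro func_supp_subset) (auto intro: C0_ser_in)
  then show "{psi C Mr \<omega> ser_zero} \<subseteq> gns_local C Mr \<omega> U"
    by (simp add: gns_local_def vec_supp_psi psi_in_gns_space ser_zero_C0)
qed

end

theorem proposition2:
  fixes C :: "('m::t2_space \<Rightarrow> complex) set"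
    and pb :: "('m \<Rightarrow> complex) \<Rightarrow> ('m \<Rightarrow> complex) \<Rightarrow> ('m \<Rightarrow> complex)"
    and Mr :: "nat \<Rightarrow> ('m \<Rightarrow> complex) \<Rightarrow> ('m \<Rightarrow> complex) \<Rightarrow> ('m \<Rightarrow> complex)"
    and \<omega> :: "(nat \<Rightarrow> 'm \<Rightarrow> complex) \<Rightarrow> complex fps"
    and U V :: "'m set"
  assumes "smooth_structure C"
    and "poisson_bracket C pb"
    and "star_product C pb Mr"
    and "lambda_linear C \<omega>"
    and "positive_functional C Mr \<omega>"
    and "open U" and "open V"
  shows "(\<exists>\<Phi>. bij_betw \<Phi> (loc_quot C Mr \<omega> U) (gns_local C Mr \<omega> U) \<and>
            (\<forall>f\<in>A0 C U. \<Phi> (loc_rel C Mr \<omega> U `` {f}) = psi C Mr \<omega> f) \<and>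
            (\<forall>X\<in>loc_quot C Mr \<omega> U. \<forall>Y\<in>loc_quot C Mr \<omega> U.
               gns_inner Mr \<omega> (\<Phi> X) (\<Phi> Y) = loc_inner Mr \<omega> X Y))
       \<and> (U \<inter> V = {} \<longrightarrow>
            (\<forall>\<Psi>\<in>gns_local C Mr \<omega> U. \<forall>\<Phi>\<in>gns_local C Mr \<omega> V. gns_inner Mr \<omega> \<Psi> \<Phi> = 0))
       \<and> (U \<inter> func_supp C \<omega> = {} \<longrightarrow> gns_local C Mr \<omega> U = {psi C Mr \<omega> ser_zero})"
proof -
  interpret gns_setting C pb Mr \<omega>
    by unfold_locales (fact assms)+
  show ?thesis
    using loc_quot_isometric_gns_local[OF \<open>open U\<close>] gns_local_orthogonal[OF \<open>open U\<close> \<open>open V\<close>]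
      gns_local_off_func_supp[OF \<open>open U\<close>]
    by simp
qed

end
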